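(* In the setting $N=2$ with $\rho<1$, assume additionally $A_{ij}''(1)<\infty$ for all $i,j$ and $\mathbb E[B^2]<\infty$. Then the mean stationary number of customers just after a departure, $\mathbb E[X]=F'(1)$, equals $$\mathbb E[X]=\frac{\rho}{2}+\frac{\mathrm{Var}(A)}{2(1-\rho)}+\frac{\mathbb E[B(B-1)]}{2\mathbb E[B]}+\frac{-\rho+\mathbb E[B](f_1(0)\alpha_1+f_2(0)\alpha_2)+\rho(\alpha_{11}+\alpha_{22})+\alpha_{12}\alpha_{21}-\alpha_{11}\alpha_{22}}{(P_{12}+P_{21})(1-\rho)},$$ where $f_1(0),f_2(0)$ are given by $f_1(0)=\frac{1-\rho}{\mathbb E[B]}\frac{A_{11}(\hat z)-\hat z}{A_{11}(\hat z)+A_{12}(\hat z)-\hat z}$, $f_2(0)=\frac{1-\rho}{\mathbb E[B]}\frac{A_{22}(\hat z)-\hat z}{A_{21}(\hat z)+A_{22}(\hat z)-\hat z}$, with $\hat z$ the zero in $|z|<1$ of $(z-A_{11}(z))(z-A_{22}(z))-A_{12}(z)A_{21}(z)$.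
   Context: $N=2$. For $i,j\in\{1,2\}$ let $A_{ij}(z)=\sum_{k\ge0}a_{ij}(k)z^k$ with $a_{ij}(k)\ge0$, $P_{ij}=A_{ij}(1)$, $P$ stochastic and irreducible with stationary distribution $\pi=(\pi_1,\pi_2)$, $\alpha_{ij}=A_{ij}'(1)$, $\alpha_i=\alpha_{i1}+\alpha_{i2}$, $\rho=\pi_1\alpha_1+\pi_2\alpha_2<1$, $A_i(z)=A_{i1}(z)+A_{i2}(z)$. $\mathrm{Var}(A)$ is the variance of the stationary number of arrivals during a service, i.e. of the random variable with generating function $\pi_1A_1(z)+\pi_2A_2(z)$: $\mathrm{Var}(A)=\sum_i\pi_iA_i''(1)+\rho-\rho^2$. $B$ is a positive-integer-valued random variable with generating function $B(z)$. The process: $(A_n,J_{n+1})_{n\ge1}$ with $\mathbb P(A_n=k,J_{n+1}=j\mid J_n=i,\text{past})=a_{ij}(k)$; $B_n$ i.i.d. copies of $B$ independent of everything; $X_n=X_{n-1}-1+A_n$ if $X_{n-1}\ge1$, $X_n=A_n+B_n-1$ if $X_{n-1}=0$. $F(z)=\lim_n\mathbb E[z^{X_n}]$ is the stationary generating function, and $f_j(0)=\lim_n\mathbb P(X_n=0,J_{n+1}=j)$. *)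

theory Defs
  imports "HOL-Analysis.Analysis"
begin

text \<open>Modes (phases) are indexed by the natural numbers 1 and 2.
  a i j k = a_{ij}(k); b m = P(B = m).\<close>

definition gf :: "(nat \<Rightarrow> real) \<Rightarrow> complex \<Rightarrow> complex" where
  "gf c z = (\<Sum>k. complex_of_real (c k) * z ^ k)"

definition mom1 :: "(nat \<Rightarrow> real) \<Rightarrow> real" where
  "mom1 c = (\<Sum>k. real k * c k)"

definition fmom2 :: "(nat \<Rightarrow> real) \<Rightarrow> real" where
  "fmom2 c = (\<Sum>k. real k * (real k - 1) * c k)"

definition Pm :: "(nat \<Rightarrow> nat \<Rightarrow> nat \<Rightarrow> real) \<Rightarrow> nat \<Rightarrow> nat \<Rightarrow> real" where
  "Pm a i j = (\<Sum>k. a i j k)"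

definition alpha :: "(nat \<Rightarrow> nat \<Rightarrow> nat \<Rightarrow> real) \<Rightarrow> nat \<Rightarrow> nat \<Rightarrow> real" where
  "alpha a i j = mom1 (a i j)"

definition alpha_row :: "(nat \<Rightarrow> nat \<Rightarrow> nat \<Rightarrow> real) \<Rightarrow> nat \<Rightarrow> real" where
  "alpha_row a i = alpha a i 1 + alpha a i 2"

definition rho :: "(nat \<Rightarrow> nat \<Rightarrow> nat \<Rightarrow> real) \<Rightarrow> (nat \<Rightarrow> real) \<Rightarrow> real" where
  "rho a \<pi> = \<pi> 1 * alpha_row a 1 + \<pi> 2 * alpha_row a 2"

definition VarA :: "(nat \<Rightarrow> nat \<Rightarrow> nat \<Rightarrow> real) \<Rightarrow> (nat \<Rightarrow> real) \<Rightarrow> real" where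
  "VarA a \<pi> = \<pi> 1 * (fmom2 (a 1 1) + fmom2 (a 1 2)) + \<pi> 2 * (fmom2 (a 2 1) + fmom2 (a 2 2))
      + rho a \<pi> - (rho a \<pi>)^2"

text \<open>One step of the chain (X_n, J_{n+1}).  q (x, i) = P(X_{n-1} = x, J_n = i);
  the result at (y, j) is P(X_n = y, J_{n+1} = j).
  If X_{n-1} = x \<ge> 1 then X_n = x - 1 + A_n, so A_n = y + 1 - x;
  if X_{n-1} = 0 then X_n = A_n + B_n - 1 with B_n = m \<ge> 1, so A_n = y + 1 - m.\<close>
definition qstep :: "(nat \<Rightarrow> nat \<Rightarrow> nat \<Rightarrow> real) \<Rightarrow> (nat \<Rightarrow> real) \<Rightarrow> (nat \<times> nat \<Rightarrow> real) \<Rightarrow> (nat \<times> nat \<Rightarrow> real)" where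
  "qstep a b q = (\<lambda>(y, j). \<Sum>i\<in>{1, 2}.
      (\<Sum>x\<in>{1..y+1}. q (x, i) * a i j (y + 1 - x))
      + q (0, i) * (\<Sum>m\<in>{1..y+1}. a i j (y + 1 - m) * b m))"

text \<open>qdist a b x0 i0 n (x, j) = P(X_n = x, J_{n+1} = j) when X_0 = x0, J_1 = i0.\<close>
definition qdist :: "(nat \<Rightarrow> nat \<Rightarrow> nat \<Rightarrow> real) \<Rightarrow> (nat \<Rightarrow> real) \<Rightarrow> nat \<Rightarrow> nat \<Rightarrow> nat \<Rightarrow> (nat \<times> nat \<Rightarrow> real)" where
  "qdist a b x0 i0 n = (qstep a b ^^ n) (\<lambda>s. if s = (x0, i0) then 1 else 0)"

end

theory Submission
  imports Defs
begin

text \<open>Write Q_n(z) for the generating functions of the joint law of (X_n, J_{n+1}). One step of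
  the chain gives z Q_{n+1,j}(z) = \<Sum>_i A_ij(z) (Q_{n,i}(z) - P(X_n = 0, J_{n+1} = i) (1 - B(z))).
  Dividing by 1 - z turns all generating functions into secant slopes (C(1) - C(z)) / (1 - z),
  which are bounded by the corresponding means; this gives a drift inequality which, as z \<rightarrow> 1
  and summed over n, shows that E[B] (f_1(0) + f_2(0)) \<ge> 1 - rho. The same identity for the limit
  f at z \<rightarrow> 1 gives E[B] (f_1(0) + f_2(0)) = (1 - rho) times the total mass of f, so no mass
  escapes and f is a probability distribution.
  Rewritten in secant form, the stationary equations become a 2 x 2 linear system for the secant
  slopes of F_1 and F_2, whose determinant tends to (P_12 + P_21) (1 - rho) \<noteq> 0; its solution
  converges as z \<rightarrow> 1, and for nonnegative coefficients this limit is E[X].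
  Finally, at a zero of the kernel determinant inside the unit disc the two stationary equations
  evaluated there are linearly dependent, which determines f_1(0) and f_2(0).\<close>

section \<open>Power series with nonnegative coefficients\<close>

definition geom_sum :: "nat \<Rightarrow> real \<Rightarrow> real" where
  "geom_sum k z = (\<Sum>l<k. z ^ l)"

definition geom_sum2 :: "nat \<Rightarrow> real \<Rightarrow> real" where
  "geom_sum2 k z = (\<Sum>l<k. geom_sum l z)"

lemma one_minus_power_eq_geom_sum: "1 - z ^ k = (1 - z) * geom_sum k z"
  unfolding geom_sum_def by (rule one_diff_power_eq)

lemma of_nat_minus_geom_sum_eq: "real k - geom_sum k z = (1 - z) * geom_sum2 k z"
proof (induction k)
  case 0
  then show ?case by (simp add: geom_sum_def geom_sum2_def)
next
  case (Suc k)
  have "real (Suc k) - geom_sum (Suc k) z = (real k - geom_sum k z) + (1 - z ^ k)"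
    by (simp add: geom_sum_def)
  also have "\<dots> = (1 - z) * geom_sum2 k z + (1 - z) * geom_sum k z"
    using Suc one_minus_power_eq_geom_sum by simp
  also have "\<dots> = (1 - z) * geom_sum2 (Suc k) z"
    by (simp add: geom_sum2_def algebra_simps)
  finally show ?case .
qed

lemma geom_sum_nonneg: "0 \<le> z \<Longrightarrow> 0 \<le> geom_sum k z"
  unfolding geom_sum_def by (intro sum_nonneg) auto

lemma geom_sum_le: "0 \<le> z \<Longrightarrow> z \<le> 1 \<Longrightarrow> geom_sum k z \<le> real k"
  unfolding geom_sum_def using sum_mono[of "{..<k}" "\<lambda>l. z ^ l" "\<lambda>_. 1"]
  by (simp add: power_le_one)

lemma geom_sum_at_1 [simp]: "geom_sum k 1 = real k"
  by (simp add: geom_sum_def)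

lemma geom_sum2_nonneg: "0 \<le> z \<Longrightarrow> 0 \<le> geom_sum2 k z"
  unfolding geom_sum2_def by (intro sum_nonneg geom_sum_nonneg)

lemma geom_sum2_le: "0 \<le> z \<Longrightarrow> z \<le> 1 \<Longrightarrow> geom_sum2 k z \<le> real k * (real k - 1) / 2"
proof (induction k)
  case 0
  then show ?case by (simp add: geom_sum2_def)
next
  case (Suc k)
  have "geom_sum2 (Suc k) z = geom_sum2 k z + geom_sum k z"
    by (simp add: geom_sum2_def)
  also have "\<dots> \<le> real k * (real k - 1) / 2 + real k"
    using Suc geom_sum_le by (intro add_mono) auto
  also have "\<dots> = real (Suc k) * (real (Suc k) - 1) / 2"
    by (simp add: field_simps)
  finally show ?case .
qed

lemma geom_sum2_at_1: "geom_sum2 k 1 = real k * (real k - 1) / 2"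
  by (induction k) (simp_all add: geom_sum2_def field_simps)

lemma continuous_on_geom_sum: "continuous_on A (geom_sum k)"
  unfolding geom_sum_def by (intro continuous_intros)

lemma continuous_on_geom_sum2: "continuous_on A (geom_sum2 k)"
  unfolding geom_sum2_def geom_sum_def by (intro continuous_intros)

lemma continuous_on_suminf_bounded:
  fixes g :: "nat \<Rightarrow> 'a::metric_space \<Rightarrow> 'b::banach"
  assumes "\<And>n. continuous_on S (g n)" and "\<And>n x. x \<in> S \<Longrightarrow> norm (g n x) \<le> M n"
    and "summable M"
  shows "continuous_on S (\<lambda>x. \<Sum>n. g n x)"
proof (rule uniform_limit_theorem[OF _ Weierstrass_m_test[OF assms(2,3)]])
  show "\<forall>\<^sub>F n in sequentially. continuous_on S (\<lambda>x. \<Sum>i<n. g i x)"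
    using assms(1) by (intro always_eventually allI continuous_on_sum) auto
qed auto

lemma continuous_on_Icc_tendsto_at_left:
  fixes h :: "real \<Rightarrow> 'a::topological_space"
  assumes "continuous_on {a..b} h" and "a < b"
  shows "(h \<longlongrightarrow> h b) (at_left b)"
proof -
  have "(h \<longlongrightarrow> h b) (at b within {a..b})"
    using assms unfolding continuous_on_def by auto
  moreover have "at b within {a..b} = at_left b"
    using assms(2) by (rule at_within_Icc_at_left)
  ultimately show ?thesis by simp
qed

lemma eventually_at_left_1_unit: "eventually (\<lambda>z. 0 < z \<and> z < (1::real)) (at_left 1)"
  using eventually_at_left_real[of 0 "1::real"] by simp

lemma summable_norm_of_real_mult_power:
  fixes z :: "'a::{real_normed_field,banach}"
  assumes "summable (\<lambda>k. \<bar>c k\<bar>)" and "norm z \<le> 1"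
  shows "summable (\<lambda>k. norm (of_real (c k) * z ^ k))"
proof (rule summable_comparison_test'[OF assms(1), of 0])
  fix k :: nat
  have "norm (of_real (c k) * z ^ k) = \<bar>c k\<bar> * norm z ^ k"
    by (simp add: norm_mult norm_power)
  also have "\<dots> \<le> \<bar>c k\<bar>"
    using assms(2) mult_left_le[of "norm z ^ k" "\<bar>c k\<bar>"] by (simp add: power_le_one)
  finally show "norm (norm (of_real (c k) * z ^ k)) \<le> \<bar>c k\<bar>" by simp
qed

lemma summable_mult_power:
  fixes c :: "nat \<Rightarrow> real"
  assumes "\<And>k. 0 \<le> c k" and "summable c" and "0 \<le> z" and "z \<le> 1"
  shows "summable (\<lambda>k. c k * z ^ k)"
  using summable_norm_cancel[OF summable_norm_of_real_mult_power[of c z]] assms by simp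

lemma summable_mom1_if_fmom2:
  fixes c :: "nat \<Rightarrow> real"
  assumes c0: "\<And>k. 0 \<le> c k" and "summable c"
    and "summable (\<lambda>k. real k * (real k - 1) * c k)"
  shows "summable (\<lambda>k. real k * c k)"
proof (rule summable_comparison_test'[OF summable_add[OF assms(3,2)], of 0])
  fix k :: nat
  have "0 \<le> (real k - 1)\<^sup>2" by simp
  then have "real k \<le> real k * (real k - 1) + 1"
    by (simp add: power2_eq_square algebra_simps)
  then have "real k * c k \<le> (real k * (real k - 1) + 1) * c k"
    using c0 by (intro mult_right_mono) auto
  then show "norm (real k * c k) \<le> real k * (real k - 1) * c k + c k"
    using c0 by (simp add: algebra_simps)
qed

definition pgf :: "(nat \<Rightarrow> real) \<Rightarrow> 'a::{real_normed_field,banach} \<Rightarrow> 'a" where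
  "pgf c z = (\<Sum>k. of_real (c k) * z ^ k)"

lemma gf_eq_pgf: "gf c z = pgf c z"
  by (simp add: gf_def pgf_def)

lemma pgf_real: "pgf c (z::real) = (\<Sum>k. c k * z ^ k)"
  by (simp add: pgf_def)

lemma pgf_at_1: "pgf c (1::real) = suminf c"
  by (simp add: pgf_def)

lemma continuous_on_pgf:
  fixes c :: "nat \<Rightarrow> real"
  assumes c0: "\<And>k. 0 \<le> c k" and "summable c"
  shows "continuous_on {0..1} (pgf c :: real \<Rightarrow> real)"
  unfolding pgf_real[abs_def]
proof (rule continuous_on_suminf_bounded[of _ _ c])
  show "continuous_on {0..1} (\<lambda>z. c k * z ^ k)" for k
    by (intro continuous_intros)
  show "norm (c k * z ^ k) \<le> c k" if "z \<in> {0..1}" for k z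
    using that c0[of k] by (auto simp: abs_mult power_le_one intro!: mult_left_le)
qed fact

text \<open>The secant slope (C(1) - C(z)) / (1 - z) of a generating function C and the second-order
  slope (C'(1) - pgf_secant c z) / (1 - z), written as series so that they are also defined, and
  continuous, at z = 1.\<close>

definition pgf_secant :: "(nat \<Rightarrow> real) \<Rightarrow> real \<Rightarrow> real" where
  "pgf_secant c z = (\<Sum>k. c k * geom_sum k z)"

definition pgf_secant2 :: "(nat \<Rightarrow> real) \<Rightarrow> real \<Rightarrow> real" where
  "pgf_secant2 c z = (\<Sum>k. c k * geom_sum2 k z)"

lemma sums_pgf_secant:
  fixes c :: "nat \<Rightarrow> real"
  assumes "\<And>k. 0 \<le> c k" and "summable c" and "0 \<le> z" and "z < 1"
  shows "(\<lambda>k. c k * geom_sum k z) sums ((suminf c - pgf c z) / (1 - z))"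
proof -
  have "(\<lambda>k. c k - c k * z ^ k) sums (suminf c - pgf c z)"
    unfolding pgf_real using assms summable_mult_power[of c z]
    by (intro sums_diff summable_sums) auto
  then have "(\<lambda>k. (c k - c k * z ^ k) / (1 - z)) sums ((suminf c - pgf c z) / (1 - z))"
    by (rule sums_divide)
  moreover have "(c k - c k * z ^ k) / (1 - z) = c k * geom_sum k z" for k
  proof -
    have "c k - c k * z ^ k = c k * (1 - z ^ k)" by (simp add: algebra_simps)
    also have "\<dots> = (1 - z) * (c k * geom_sum k z)" by (simp add: one_minus_power_eq_geom_sum)
    finally show ?thesis using assms(4) by simp
  qed
  ultimately show ?thesis by simp
qed

lemma pgf_eq_secant:
  fixes c :: "nat \<Rightarrow> real"
  assumes "\<And>k. 0 \<le> c k" and "summable c" and "0 \<le> z" and "z < 1"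
  shows "pgf c z = suminf c - (1 - z) * pgf_secant c z"
  using sums_unique[OF sums_pgf_secant[OF assms]] assms(4)
  unfolding pgf_secant_def by (simp add: field_simps)

lemma pgf_secant_nonneg:
  fixes c :: "nat \<Rightarrow> real"
  assumes "\<And>k. 0 \<le> c k" and "summable c" and "0 \<le> z" and "z < 1"
  shows "0 \<le> pgf_secant c z"
  unfolding pgf_secant_def using sums_pgf_secant[OF assms] assms
  by (intro suminf_nonneg) (auto simp: sums_iff geom_sum_nonneg)

lemma summable_secant_terms:
  fixes c :: "nat \<Rightarrow> real"
  assumes c0: "\<And>k. 0 \<le> c k" and "summable (\<lambda>k. real k * c k)" and "0 \<le> z" and "z \<le> 1"
  shows "summable (\<lambda>k. c k * geom_sum k z)"
proof (rule summable_comparison_test'[OF assms(2), of 0])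
  fix k :: nat
  have "c k * geom_sum k z \<le> c k * real k"
    using geom_sum_le[OF assms(3,4)] c0[of k] by (rule mult_left_mono)
  then show "norm (c k * geom_sum k z) \<le> real k * c k"
    using c0[of k] geom_sum_nonneg[OF assms(3), of k] by (simp add: mult.commute)
qed

lemma pgf_secant_le_mom1:
  fixes c :: "nat \<Rightarrow> real"
  assumes c0: "\<And>k. 0 \<le> c k" and "summable (\<lambda>k. real k * c k)" and "0 \<le> z" and "z \<le> 1"
  shows "pgf_secant c z \<le> mom1 c"
  unfolding pgf_secant_def mom1_def
proof (rule suminf_le[OF _ summable_secant_terms[OF assms] assms(2)])
  show "c k * geom_sum k z \<le> real k * c k" for k
    using mult_left_mono[OF geom_sum_le[OF assms(3,4)] c0[of k]] by (simp add: mult.commute)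
qed

lemma summable_secant2_terms:
  fixes c :: "nat \<Rightarrow> real"
  assumes c0: "\<And>k. 0 \<le> c k" and c2: "summable (\<lambda>k. real k * (real k - 1) * c k)"
    and z: "0 \<le> z" "z \<le> 1"
  shows "summable (\<lambda>k. c k * geom_sum2 k z)"
proof (rule summable_comparison_test'[OF summable_divide[OF c2, of 2], of 0])
  fix k :: nat
  have "c k * geom_sum2 k z \<le> c k * (real k * (real k - 1) / 2)"
    using geom_sum2_le[OF z] c0[of k] by (rule mult_left_mono)
  then show "norm (c k * geom_sum2 k z) \<le> real k * (real k - 1) * c k / 2"
    using c0[of k] geom_sum2_nonneg[OF z(1), of k] by (simp add: mult_ac)
qed

lemma pgf_secant_eq_mom1_minus:
  fixes c :: "nat \<Rightarrow> real"
  assumes c0: "\<And>k. 0 \<le> c k" and "summable c" and c2: "summable (\<lambda>k. real k * (real k - 1) * c k)"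
    and z: "0 \<le> z" "z \<le> 1"
  shows "pgf_secant c z = mom1 c - (1 - z) * pgf_secant2 c z"
proof -
  have c1: "summable (\<lambda>k. real k * c k)"
    by (rule summable_mom1_if_fmom2[OF c0 assms(2) c2])
  have "summable (\<lambda>k. c k * geom_sum2 k z)"
    by (rule summable_secant2_terms[OF c0 c2 z])
  moreover have "c k * geom_sum k z = real k * c k - (1 - z) * (c k * geom_sum2 k z)" for k
  proof -
    have g: "geom_sum k z = real k - (1 - z) * geom_sum2 k z"
      using of_nat_minus_geom_sum_eq[of k z] by simp
    show ?thesis unfolding g by (simp add: algebra_simps)
  qed
  ultimately show ?thesis
    unfolding pgf_secant_def pgf_secant2_def mom1_def
    by (simp add: suminf_diff[symmetric] suminf_mult c1 summable_mult)
qed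

lemma norm_pgf_le:
  fixes z :: "'a::{real_normed_field,banach}"
  assumes b0: "\<And>m. 0 \<le> b m" and b_pos: "b 0 = 0" and bs: "summable b" and b_sum: "suminf b = 1"
    and z: "norm z \<le> 1"
  shows "norm (pgf b z) \<le> norm z"
proof -
  have terms: "summable (\<lambda>m. norm (of_real (b m) * z ^ m))"
    using b0 bs z by (intro summable_norm_of_real_mult_power) auto
  have "norm (pgf b z) \<le> (\<Sum>m. norm (of_real (b m) * z ^ m))"
    unfolding pgf_def by (rule summable_norm[OF terms])
  also have "\<dots> \<le> (\<Sum>m. b m * norm z)"
  proof (rule suminf_le[OF _ terms summable_mult2[OF bs]])
    show "norm (of_real (b m) * z ^ m) \<le> b m * norm z" for m
    proof (cases m)
      case (Suc k)
      have "norm z ^ m \<le> norm z"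
        using z Suc power_decreasing[of 1 m "norm z"] by simp
      then show ?thesis
        using b0[of m] by (simp add: norm_mult norm_power mult_left_mono)
    qed (simp add: b_pos)
  qed
  also have "\<dots> = norm z"
    using suminf_mult2[OF bs, of "norm z"] b_sum by simp
  finally show ?thesis .
qed

lemma continuous_on_pgf_secant2:
  fixes c :: "nat \<Rightarrow> real"
  assumes c0: "\<And>k. 0 \<le> c k" and c2: "summable (\<lambda>k. real k * (real k - 1) * c k)"
  shows "continuous_on {0..1} (pgf_secant2 c)"
  unfolding pgf_secant2_def[abs_def]
proof (rule continuous_on_suminf_bounded[of _ _ "\<lambda>k. real k * (real k - 1) * c k / 2"])
  show "continuous_on {0..1} (\<lambda>z. c k * geom_sum2 k z)" for k
    by (intro continuous_intros continuous_on_geom_sum2)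
  show "norm (c k * geom_sum2 k z) \<le> real k * (real k - 1) * c k / 2" if "z \<in> {0..1}" for k z
  proof -
    have "c k * geom_sum2 k z \<le> c k * (real k * (real k - 1) / 2)"
      using that geom_sum2_le[of z k] c0[of k] by (intro mult_left_mono) auto
    then show ?thesis
      using that c0[of k] geom_sum2_nonneg[of z k] by (simp add: mult_ac)
  qed
  show "summable (\<lambda>k. real k * (real k - 1) * c k / 2)"
    by (intro summable_divide c2)
qed

lemma pgf_secant2_at_1:
  assumes "summable (\<lambda>k. real k * (real k - 1) * c k)"
  shows "pgf_secant2 c 1 = fmom2 c / 2"
  unfolding pgf_secant2_def fmom2_def geom_sum2_at_1
  using suminf_divide[OF assms, of 2] by (simp add: mult_ac)

lemma tendsto_pgf_secant2:
  fixes c :: "nat \<Rightarrow> real"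
  assumes "\<And>k. 0 \<le> c k" and "summable (\<lambda>k. real k * (real k - 1) * c k)"
  shows "(pgf_secant2 c \<longlongrightarrow> fmom2 c / 2) (at_left 1)"
  using continuous_on_Icc_tendsto_at_left[OF continuous_on_pgf_secant2[OF assms] zero_less_one]
  by (simp add: pgf_secant2_at_1[OF assms(2)])

lemma tendsto_pgf_secant:
  fixes c :: "nat \<Rightarrow> real"
  assumes c0: "\<And>k. 0 \<le> c k" and "summable c" and c2: "summable (\<lambda>k. real k * (real k - 1) * c k)"
  shows "(pgf_secant c \<longlongrightarrow> mom1 c) (at_left 1)"
proof (rule Lim_transform_eventually)
  have "((\<lambda>z. mom1 c - (1 - z) * pgf_secant2 c z) \<longlongrightarrow> mom1 c - (1 - 1) * (fmom2 c / 2))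
      (at_left 1)"
    by (intro tendsto_intros tendsto_pgf_secant2[OF c0 c2])
  then show "((\<lambda>z. mom1 c - (1 - z) * pgf_secant2 c z) \<longlongrightarrow> mom1 c) (at_left 1)"
    by simp
  show "\<forall>\<^sub>F z in at_left 1. mom1 c - (1 - z) * pgf_secant2 c z = pgf_secant c z"
    using eventually_at_left_1_unit
    by eventually_elim (simp add: pgf_secant_eq_mom1_minus[OF assms])
qed

text \<open>A Tauberian statement that is elementary for nonnegative coefficients: partial sums of the
  first moment are limits of partial sums of secant slopes, and secant slopes are bounded by the
  first moment.\<close>

lemma has_sum_mom1_if_tendsto_secant:
  fixes c :: "nat \<Rightarrow> real"
  assumes c0: "\<And>k. 0 \<le> c k" and cs: "summable c"
    and lim: "(pgf_secant c \<longlongrightarrow> L) (at_left 1)"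
  shows "((\<lambda>k. real k * c k) has_sum L) UNIV"
proof -
  have partial: "(\<Sum>k<N. real k * c k) \<le> L" for N
  proof (rule tendsto_le[OF trivial_limit_at_left_real lim])
    have "((\<lambda>z. \<Sum>k<N. c k * geom_sum k z) \<longlongrightarrow> (\<Sum>k<N. c k * geom_sum k 1)) (at_left 1)"
      by (intro continuous_on_Icc_tendsto_at_left[of 0] continuous_intros continuous_on_geom_sum) simp
    then show "((\<lambda>z. \<Sum>k<N. c k * geom_sum k z) \<longlongrightarrow> (\<Sum>k<N. real k * c k)) (at_left 1)"
      by (simp add: mult.commute)
    show "\<forall>\<^sub>F z in at_left 1. (\<Sum>k<N. c k * geom_sum k z) \<le> pgf_secant c z"
      using eventually_at_left_1_unit
    proof eventually_elim
      case (elim z)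
      then show ?case
        unfolding pgf_secant_def using sums_pgf_secant[OF c0 cs, of z] c0 geom_sum_nonneg[of z]
        by (intro sum_le_suminf) (auto simp: sums_iff)
    qed
  qed
  have s1: "summable (\<lambda>k. real k * c k)"
    by (rule summableI_nonneg_bounded[OF _ partial]) (use c0 in auto)
  have "(\<Sum>k. real k * c k) \<le> L"
    by (rule suminf_le_const[OF s1 partial])
  moreover have "L \<le> (\<Sum>k. real k * c k)"
  proof (rule tendsto_le[OF trivial_limit_at_left_real tendsto_const lim])
    show "\<forall>\<^sub>F z in at_left 1. pgf_secant c z \<le> (\<Sum>k. real k * c k)"
      using eventually_at_left_1_unit
      by eventually_elim (use pgf_secant_le_mom1[OF c0 s1] in \<open>auto simp: mom1_def\<close>)
  qed
  ultimately have "(\<lambda>k. real k * c k) sums L"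
    using s1 by (simp add: sums_iff)
  then show ?thesis
    by (intro norm_summable_imp_has_sum) (use s1 c0 in auto)
qed

lemma le_limit_if_partial_sums_ge:
  fixes p :: "nat \<Rightarrow> real"
  assumes lim: "p \<longlonglongrightarrow> L" and partial: "\<And>N. real N * r - K \<le> (\<Sum>n<N. p n)"
  shows "r \<le> L"
proof (rule ccontr)
  assume "\<not> r \<le> L"
  define eps where "eps = (r - L) / 2"
  have eps: "0 < eps" using \<open>\<not> r \<le> L\<close> by (simp add: eps_def)
  obtain n0 where n0: "\<And>n. n \<ge> n0 \<Longrightarrow> p n < L + eps"
    using order_tendstoD(2)[OF lim, of "L + eps"] eps by (auto simp: eventually_sequentially)
  define C where "C = (\<Sum>n<n0. p n)"
  have upper: "(\<Sum>n<n0 + M. p n) \<le> C + real M * (L + eps)" for M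
  proof (induction M)
    case (Suc M)
    then show ?case using n0[of "n0 + M"] by (simp add: algebra_simps)
  qed (simp add: C_def)
  obtain M :: nat where M: "(C + K - real n0 * r) / eps < real M"
    using reals_Archimedean2 by blast
  have "real (n0 + M) * r - K \<le> C + real M * (L + eps)"
    using partial upper by (rule order_trans)
  moreover have "real M * (L + eps) = real M * r - real M * eps"
    by (simp add: eps_def algebra_simps)
  moreover have "C + K - real n0 * r < real M * eps"
    using M eps by (simp add: field_simps)
  ultimately show False by (simp add: algebra_simps)
qed

lemma sum_of_solution_2x2:
  fixes m11 m12 m21 m22 e1 e2 r1 r2 :: real
  assumes "m11 * e1 + m12 * e2 = r1" and "m21 * e1 + m22 * e2 = r2"
    and "m11 * m22 - m12 * m21 \<noteq> 0"
  shows "e1 + e2 = (r1 * (m22 - m21) + r2 * (m11 - m12)) / (m11 * m22 - m12 * m21)"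
proof -
  have "(e1 + e2) * (m11 * m22 - m12 * m21) = r1 * (m22 - m21) + r2 * (m11 - m12)"
    unfolding assms(1,2)[symmetric] by (simp add: algebra_simps)
  then show ?thesis
    using assms(3) by (simp add: field_simps)
qed

section \<open>One step of the embedded chain\<close>

text \<open>If X is the number left behind by a departure in phase i, the next service starts with
  X - 1 further customers waiting when X \<ge> 1, and with B - 1 of them when X = 0; this is the law
  of that number.\<close>

definition pre_arrival :: "(nat \<times> nat \<Rightarrow> real) \<Rightarrow> (nat \<Rightarrow> real) \<Rightarrow> nat \<Rightarrow> nat \<Rightarrow> real" where
  "pre_arrival q b i k = q (Suc k, i) + q (0, i) * b (Suc k)"

lemma qstep_eq_convolution:
  "qstep a b q (y, j) = (\<Sum>i\<in>{1,2}. \<Sum>k\<le>y. pre_arrival q b i k * a i j (y - k))"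
proof -
  have shift: "(\<Sum>x\<in>{1..y+1}. g x * a i j (y + 1 - x)) = (\<Sum>k\<le>y. g (Suc k) * a i j (y - k))"
    for g :: "nat \<Rightarrow> real" and i
  proof -
    have "(\<Sum>x\<in>{1..y+1}. g x * a i j (y + 1 - x)) = (\<Sum>x\<in>{Suc 0..Suc y}. g x * a i j (y + 1 - x))"
      by simp
    also have "\<dots> = (\<Sum>k=0..y. g (Suc k) * a i j (y - k))"
      by (subst sum.shift_bounds_cl_Suc_ivl) simp
    finally show ?thesis by (simp add: atMost_atLeast0)
  qed
  have "(\<Sum>x\<in>{1..y+1}. q (x, i) * a i j (y + 1 - x)) + q (0, i) * (\<Sum>m\<in>{1..y+1}. a i j (y + 1 - m) * b m)
      = (\<Sum>k\<le>y. pre_arrival q b i k * a i j (y - k))" for i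
    using shift[of "\<lambda>x. q (x, i)" i] shift[of b i]
    by (simp add: pre_arrival_def sum.distrib sum_distrib_left algebra_simps)
  then show ?thesis
    unfolding qstep_def prod.case by simp
qed

lemma qstep_nonneg:
  assumes a0: "\<And>i j k. i \<in> {1,2} \<Longrightarrow> j \<in> {1,2} \<Longrightarrow> 0 \<le> a i j k" and b0: "\<And>m. 0 \<le> b m"
    and q0: "\<And>x i. i \<in> {1,2} \<Longrightarrow> 0 \<le> q (x, i)" and j: "j \<in> {1,2}"
  shows "0 \<le> qstep a b q (y, j)"
  unfolding qstep_eq_convolution pre_arrival_def
  using a0 b0 q0 j by (intro sum_nonneg add_nonneg_nonneg mult_nonneg_nonneg) auto

lemma summable_abs_pre_arrival:
  assumes "\<And>x. 0 \<le> q (x, i)" and "summable (\<lambda>x. q (x, i))"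
    and "\<And>m. 0 \<le> b m" and "summable b"
  shows "summable (\<lambda>k. \<bar>pre_arrival q b i k\<bar>)"
proof -
  have "summable (pre_arrival q b i)"
    unfolding pre_arrival_def
    using summable_ignore_initial_segment[OF assms(2), of 1] summable_ignore_initial_segment[OF assms(4), of 1]
    by (intro summable_add summable_mult) simp_all
  moreover have "0 \<le> pre_arrival q b i k" for k
    unfolding pre_arrival_def using assms by simp
  ultimately show ?thesis by simp
qed

lemma pgf_qstep_sums:
  fixes z :: "'a::{real_normed_field,banach}"
  assumes a0: "\<And>i j k. i \<in> {1,2} \<Longrightarrow> j \<in> {1,2} \<Longrightarrow> 0 \<le> a i j k"
    and as: "\<And>i j. i \<in> {1,2} \<Longrightarrow> j \<in> {1,2} \<Longrightarrow> summable (a i j)"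
    and b0: "\<And>m. 0 \<le> b m" and bs: "summable b"
    and q0: "\<And>x i. i \<in> {1,2} \<Longrightarrow> 0 \<le> q (x, i)"
    and qs: "\<And>i. i \<in> {1,2} \<Longrightarrow> summable (\<lambda>x. q (x, i))"
    and j: "j \<in> {1,2}" and z: "norm z \<le> 1"
  shows "(\<lambda>y. of_real (qstep a b q (y, j)) * z ^ y)
           sums (\<Sum>i\<in>{1,2}. pgf (pre_arrival q b i) z * pgf (a i j) z)"
proof -
  have conv: "(\<lambda>y. of_real (\<Sum>k\<le>y. pre_arrival q b i k * a i j (y - k)) * z ^ y)
                sums (pgf (pre_arrival q b i) z * pgf (a i j) z)" if i: "i \<in> {1,2}" for i
  proof -
    have "summable (\<lambda>k. norm (of_real (pre_arrival q b i k) * z ^ k))"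
      using summable_abs_pre_arrival[of q i b] q0 qs b0 bs i
      by (intro summable_norm_of_real_mult_power z) auto
    moreover have "summable (\<lambda>k. norm (of_real (a i j k) * z ^ k))"
      using a0[OF i j] as[OF i j] by (intro summable_norm_of_real_mult_power z) auto
    ultimately have "(\<lambda>y. \<Sum>k\<le>y. (of_real (pre_arrival q b i k) * z ^ k) * (of_real (a i j (y - k)) * z ^ (y - k)))
        sums (pgf (pre_arrival q b i) z * pgf (a i j) z)"
      unfolding pgf_def by (rule Cauchy_product_sums)
    moreover have "(of_real (pre_arrival q b i k) * z ^ k) * (of_real (a i j (y - k)) * z ^ (y - k))
        = of_real (pre_arrival q b i k * a i j (y - k)) * z ^ y" if "k \<le> y" for k y
      using that by (simp add: mult_ac power_add[symmetric])
    ultimately show ?thesis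
      by (simp add: sum_distrib_right)
  qed
  show ?thesis
    unfolding qstep_eq_convolution using sums_add[OF conv conv] by (simp add: distrib_right)
qed

lemma pgf_pre_arrival:
  fixes z :: "'a::{real_normed_field,banach}"
  assumes q0: "\<And>x. 0 \<le> q (x, i)" and qs: "summable (\<lambda>x. q (x, i))"
    and b0: "\<And>m. 0 \<le> b m" and bs: "summable b" and b_pos: "b 0 = 0" and z: "norm z \<le> 1"
  shows "z * pgf (pre_arrival q b i) z = pgf (\<lambda>x. q (x, i)) z - of_real (q (0, i)) * (1 - pgf b z)"
proof -
  have terms: "summable (\<lambda>k. of_real (c k) * z ^ k)"
    if "\<And>k. 0 \<le> c k" "summable c" for c
    using that by (intro summable_norm_cancel[OF summable_norm_of_real_mult_power] z) auto
  have tail_q: "(\<lambda>k. of_real (q (Suc k, i)) * z ^ Suc k) sums (pgf (\<lambda>x. q (x, i)) z - of_real (q (0, i)))"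
    using summable_sums[OF terms[of "\<lambda>x. q (x, i)"]] q0 qs unfolding pgf_def
    by (subst sums_Suc_iff) simp
  have tail_b: "(\<lambda>k. of_real (b (Suc k)) * z ^ Suc k) sums pgf b z"
    using summable_sums[OF terms[of b]] b0 bs b_pos unfolding pgf_def
    by (subst sums_Suc_iff) simp
  have "(\<lambda>k. z * (of_real (pre_arrival q b i k) * z ^ k)) sums
      (pgf (\<lambda>x. q (x, i)) z - of_real (q (0, i)) + of_real (q (0, i)) * pgf b z)"
    using sums_add[OF tail_q sums_mult[OF tail_b, of "of_real (q (0, i))"]]
    by (simp add: pre_arrival_def algebra_simps)
  moreover have "(\<lambda>k. z * (of_real (pre_arrival q b i k) * z ^ k)) sums (z * pgf (pre_arrival q b i) z)"
  proof -
    have "summable (pre_arrival q b i)"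
      using summable_abs_pre_arrival[OF q0 qs b0 bs] by (rule summable_rabs_cancel)
    then have "summable (\<lambda>k. of_real (pre_arrival q b i k) * z ^ k)"
      using q0 b0 by (intro terms[OF _ \<open>summable (pre_arrival q b i)\<close>]) (simp add: pre_arrival_def)
    then show ?thesis
      unfolding pgf_def by (intro sums_mult summable_sums)
  qed
  ultimately have "z * pgf (pre_arrival q b i) z
      = pgf (\<lambda>x. q (x, i)) z - of_real (q (0, i)) + of_real (q (0, i)) * pgf b z"
    using sums_unique2 by blast
  then show ?thesis
    by (simp add: algebra_simps)
qed

lemma summable_qstep:
  assumes a0: "\<And>i j k. i \<in> {1,2} \<Longrightarrow> j \<in> {1,2} \<Longrightarrow> 0 \<le> a i j k"
    and as: "\<And>i j. i \<in> {1,2} \<Longrightarrow> j \<in> {1,2} \<Longrightarrow> summable (a i j)"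
    and b0: "\<And>m. 0 \<le> b m" and bs: "summable b"
    and q0: "\<And>x i. i \<in> {1,2} \<Longrightarrow> 0 \<le> q (x, i)"
    and qs: "\<And>i. i \<in> {1,2} \<Longrightarrow> summable (\<lambda>x. q (x, i))"
    and j: "j \<in> {1,2}"
  shows "summable (\<lambda>y. qstep a b q (y, j))"
  using pgf_qstep_sums[where a=a and b=b and q=q and z="1::real", OF assms] by (simp add: sums_iff)

lemma pgf_qstep:
  fixes z :: "'a::{real_normed_field,banach}"
  assumes a0: "\<And>i j k. i \<in> {1,2} \<Longrightarrow> j \<in> {1,2} \<Longrightarrow> 0 \<le> a i j k"
    and as: "\<And>i j. i \<in> {1,2} \<Longrightarrow> j \<in> {1,2} \<Longrightarrow> summable (a i j)"
    and b0: "\<And>m. 0 \<le> b m" and bs: "summable b" and b_pos: "b 0 = 0"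
    and q0: "\<And>x i. i \<in> {1,2} \<Longrightarrow> 0 \<le> q (x, i)"
    and qs: "\<And>i. i \<in> {1,2} \<Longrightarrow> summable (\<lambda>x. q (x, i))"
    and j: "j \<in> {1,2}" and z: "norm z \<le> 1"
  shows "z * pgf (\<lambda>y. qstep a b q (y, j)) z
       = (\<Sum>i\<in>{1,2}. pgf (a i j) z * (pgf (\<lambda>x. q (x, i)) z - of_real (q (0, i)) * (1 - pgf b z)))"
proof -
  have "pgf (\<lambda>y. qstep a b q (y, j)) z = (\<Sum>i\<in>{1,2}. pgf (pre_arrival q b i) z * pgf (a i j) z)"
    using sums_unique[OF pgf_qstep_sums[where a=a and b=b and q=q, OF a0 as b0 bs q0 qs j z]]
    unfolding pgf_def by simp
  then have "z * pgf (\<lambda>y. qstep a b q (y, j)) z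
      = (\<Sum>i\<in>{1,2}. (z * pgf (pre_arrival q b i) z) * pgf (a i j) z)"
    by (simp add: distrib_left mult.assoc)
  also have "\<dots> = (\<Sum>i\<in>{1,2}. pgf (a i j) z * (pgf (\<lambda>x. q (x, i)) z - of_real (q (0, i)) * (1 - pgf b z)))"
    using pgf_pre_arrival[where q=q, OF q0 qs b0 bs b_pos z] by (simp add: mult.commute)
  finally show ?thesis .
qed

section \<open>The drift bound\<close>

locale modulated_queue =
  fixes a :: "nat \<Rightarrow> nat \<Rightarrow> nat \<Rightarrow> real" and b :: "nat \<Rightarrow> real"
    and \<pi> :: "nat \<Rightarrow> real" and f :: "nat \<Rightarrow> nat \<Rightarrow> real" and x0 i0 :: nat
  assumes a_nonneg: "\<forall>i\<in>{1,2}. \<forall>j\<in>{1,2}. \<forall>k. a i j k \<ge> 0"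
    and a_summable: "\<forall>i\<in>{1,2}. \<forall>j\<in>{1,2}. summable (a i j)"
    and stochastic: "\<forall>i\<in>{1,2}. Pm a i 1 + Pm a i 2 = 1"
    and irreducible: "Pm a 1 2 > 0" "Pm a 2 1 > 0"
    and stationary: "\<pi> 1 \<ge> 0" "\<pi> 2 \<ge> 0" "\<pi> 1 + \<pi> 2 = 1"
      "\<forall>j\<in>{1,2}. \<pi> j = \<pi> 1 * Pm a 1 j + \<pi> 2 * Pm a 2 j"
    and a_second: "\<forall>i\<in>{1,2}. \<forall>j\<in>{1,2}. summable (\<lambda>k. real k * (real k - 1) * a i j k)"
    and rho_lt1: "rho a \<pi> < 1"
    and b_nonneg: "\<forall>m. b m \<ge> 0" and b_pos: "b 0 = 0"
    and b_summable: "summable b" and b_sum: "suminf b = 1"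
    and b_second: "summable (\<lambda>m. (real m)^2 * b m)"
    and init: "i0 \<in> {1,2}"
    and limit: "\<forall>x. \<forall>j\<in>{1,2}. (\<lambda>n. qdist a b x0 i0 n (x, j)) \<longlonglongrightarrow> f x j"
begin

abbreviation "q n \<equiv> qdist a b x0 i0 n"
abbreviation "qphase n i \<equiv> \<lambda>x. q n (x, i)"
abbreviation "P i j \<equiv> Pm a i j"
abbreviation "S \<equiv> P 1 2 + P 2 1"
abbreviation "al i \<equiv> alpha_row a i"
abbreviation "EB \<equiv> mom1 b"

lemma a_nonneg': "i \<in> {1,2} \<Longrightarrow> j \<in> {1,2} \<Longrightarrow> 0 \<le> a i j k"
  by (rule a_nonneg[rule_format])

lemma a_summable': "i \<in> {1,2} \<Longrightarrow> j \<in> {1,2} \<Longrightarrow> summable (a i j)"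
  by (rule a_summable[rule_format])

lemma a_second': "i \<in> {1,2} \<Longrightarrow> j \<in> {1,2} \<Longrightarrow> summable (\<lambda>k. real k * (real k - 1) * a i j k)"
  by (rule a_second[rule_format])

lemma b_nonneg': "0 \<le> b m"
  using b_nonneg by simp

lemma b_second': "summable (\<lambda>k. real k * (real k - 1) * b k)"
proof (rule summable_comparison_test'[OF b_second, of 0])
  fix k :: nat
  have "real k * (real k - 1) * b k \<le> (real k)\<^sup>2 * b k"
    using b_nonneg'[of k] by (intro mult_right_mono) (simp_all add: power2_eq_square algebra_simps)
  moreover have "0 \<le> real k * (real k - 1)"
    by (cases k) auto
  ultimately show "norm (real k * (real k - 1) * b k) \<le> (real k)\<^sup>2 * b k"
    using b_nonneg'[of k] by simp
qed

lemma summable_mom1_a: "i \<in> {1,2} \<Longrightarrow> j \<in> {1,2} \<Longrightarrow> summable (\<lambda>k. real k * a i j k)"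
  by (intro summable_mom1_if_fmom2 a_nonneg' a_summable' a_second')

lemma summable_mom1_b: "summable (\<lambda>k. real k * b k)"
  by (intro summable_mom1_if_fmom2 b_nonneg' b_summable b_second')

lemma EB_ge_1: "1 \<le> EB"
proof -
  have "suminf b \<le> (\<Sum>k. real k * b k)"
  proof (rule suminf_le[OF _ b_summable summable_mom1_b])
    show "b k \<le> real k * b k" for k
      using b_pos b_nonneg'[of k] by (cases k) (auto simp: algebra_simps)
  qed
  then show ?thesis
    using b_sum unfolding mom1_def by simp
qed

lemma P11_eq: "P 1 1 = 1 - P 1 2"
  using stochastic by auto

lemma S_pos: "S > 0"
  using irreducible by simp

lemma pi1_eq: "\<pi> 1 = P 2 1 / S" and pi2_eq: "\<pi> 2 = P 1 2 / S"
proof -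
  have "\<pi> 1 = \<pi> 1 * (1 - P 1 2) + \<pi> 2 * P 2 1"
    using stationary(4) P11_eq by simp
  then have "\<pi> 1 * P 1 2 = \<pi> 2 * P 2 1"
    by (simp add: algebra_simps)
  then have "\<pi> 1 * S = (\<pi> 1 + \<pi> 2) * P 2 1"
    by (simp add: algebra_simps)
  then have "\<pi> 1 * S = P 2 1"
    using stationary(3) by simp
  then show "\<pi> 1 = P 2 1 / S"
    using S_pos by (simp add: field_simps)
  then show "\<pi> 2 = P 1 2 / S"
    using stationary(3) S_pos by (simp add: field_simps)
qed

lemma rho_eq: "rho a \<pi> = (P 2 1 * al 1 + P 1 2 * al 2) / S"
  unfolding rho_def pi1_eq pi2_eq by (simp add: add_divide_distrib)

definition phase_weight :: real where
  "phase_weight = (al 1 - al 2) / S"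

text \<open>The mean number of arrivals in a service started in phase distribution (T1, T2) differs
  from rho by a multiple of the one-step change of the phase-1 probability, which telescopes.\<close>

lemma mean_arrivals_eq_rho_plus_phase_change:
  assumes "T1 + T2 = 1"
  shows "al 1 * T1 + al 2 * T2 = rho a \<pi> + phase_weight * (T1 - (P 1 1 * T1 + P 2 1 * T2))"
proof -
  have T2: "T2 = 1 - T1"
    using assms by simp
  have "S * (al 1 * T1 + al 2 * T2)
      = (P 2 1 * al 1 + P 1 2 * al 2) + (al 1 - al 2) * (T1 - (P 1 1 * T1 + P 2 1 * T2))"
    unfolding T2 P11_eq by (simp add: algebra_simps)
  then have "al 1 * T1 + al 2 * T2
      = ((P 2 1 * al 1 + P 1 2 * al 2) + (al 1 - al 2) * (T1 - (P 1 1 * T1 + P 2 1 * T2))) / S"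
    using S_pos by (simp add: field_simps)
  then show ?thesis
    unfolding rho_eq phase_weight_def by (simp add: add_divide_distrib)
qed

lemma q_Suc: "q (Suc n) = qstep a b (q n)"
  by (simp add: qdist_def)

lemma q_nonneg: "i \<in> {1,2} \<Longrightarrow> 0 \<le> q n (x, i)"
proof (induction n arbitrary: x i)
  case 0
  then show ?case by (simp add: qdist_def)
next
  case (Suc n)
  then show ?case
    unfolding q_Suc by (intro qstep_nonneg a_nonneg' b_nonneg') auto
qed

lemma q_summable: "i \<in> {1,2} \<Longrightarrow> summable (qphase n i)"
proof (induction n arbitrary: i)
  case 0
  have "summable (\<lambda>x. if x = x0 \<and> i = i0 then (1::real) else 0)"
    by (rule summable_finite[of "{x0}"]) auto
  then show ?case by (simp add: qdist_def)
next
  case (Suc n)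
  then show ?case
    unfolding q_Suc by (intro summable_qstep a_nonneg' a_summable' b_nonneg' b_summable q_nonneg) auto
qed

lemma pgf_qphase_Suc:
  assumes "j \<in> {1,2}" and "\<bar>z\<bar> \<le> 1"
  shows "z * pgf (qphase (Suc n) j) z
       = (\<Sum>i\<in>{1,2}. pgf (a i j) z * (pgf (qphase n i) z - q n (0, i) * (1 - pgf b z)))"
  unfolding q_Suc using assms
  by (subst pgf_qstep[where a=a and b=b and q="q n"])
     (auto intro: a_nonneg' a_summable' b_nonneg' b_summable b_pos q_nonneg q_summable)

definition phase_mass :: "nat \<Rightarrow> nat \<Rightarrow> real" where
  "phase_mass n i = suminf (qphase n i)"

lemma phase_mass_nonneg: "i \<in> {1,2} \<Longrightarrow> 0 \<le> phase_mass n i"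
  unfolding phase_mass_def using q_summable q_nonneg by (simp add: suminf_nonneg)

lemma phase_mass_0: "phase_mass 0 i = (if i = i0 then 1 else 0)"
proof -
  have "qphase 0 i = (\<lambda>x. if x = x0 then (if i = i0 then 1 else 0) else 0)"
    by (auto simp: qdist_def)
  then show ?thesis
    unfolding phase_mass_def using sums_single[of x0 "\<lambda>_. if i = i0 then 1 else (0::real)"]
    by (simp add: sums_iff)
qed

lemma phase_mass_Suc:
  "j \<in> {1,2} \<Longrightarrow> phase_mass (Suc n) j = phase_mass n 1 * P 1 j + phase_mass n 2 * P 2 j"
  using pgf_qphase_Suc[of j 1 n]
  by (simp add: phase_mass_def pgf_at_1 b_sum Pm_def mult.commute)

lemma phase_mass_sum: "phase_mass n 1 + phase_mass n 2 = 1"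
proof (induction n)
  case 0
  then show ?case using init by (auto simp: phase_mass_0)
next
  case (Suc n)
  have "phase_mass (Suc n) 1 + phase_mass (Suc n) 2
      = phase_mass n 1 * (P 1 1 + P 1 2) + phase_mass n 2 * (P 2 1 + P 2 2)"
    using phase_mass_Suc[of 1 n] phase_mass_Suc[of 2 n] by (simp add: algebra_simps)
  then show ?case
    using Suc stochastic by simp
qed

definition row_secant :: "nat \<Rightarrow> real \<Rightarrow> real" where
  "row_secant i z = pgf_secant (a i 1) z + pgf_secant (a i 2) z"

lemma pgf_row_eq:
  assumes "i \<in> {1,2}" and "0 \<le> z" and "z < 1"
  shows "pgf (a i 1) z + pgf (a i 2) z = 1 - (1 - z) * row_secant i z"
  using assms stochastic pgf_eq_secant[OF a_nonneg' a_summable', of i 1 z]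
    pgf_eq_secant[OF a_nonneg' a_summable', of i 2 z]
  by (auto simp: row_secant_def Pm_def algebra_simps)

lemma row_secant_bounds:
  assumes "i \<in> {1,2}" and "0 \<le> z" and "z < 1"
  shows "0 \<le> row_secant i z" and "row_secant i z \<le> al i"
proof -
  have "0 \<le> pgf_secant (a i j) z" "pgf_secant (a i j) z \<le> alpha a i j" if "j \<in> {1,2}" for j
    using assms that pgf_secant_nonneg[OF a_nonneg' a_summable', of i j z]
      pgf_secant_le_mom1[OF a_nonneg' summable_mom1_a, of i j z]
    by (auto simp: alpha_def)
  then show "0 \<le> row_secant i z" "row_secant i z \<le> al i"
    unfolding row_secant_def alpha_row_def by (auto intro: add_mono)
qed

lemma pgf_b_eq: "0 \<le> z \<Longrightarrow> z < 1 \<Longrightarrow> 1 - pgf b z = (1 - z) * pgf_secant b z"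
  using pgf_eq_secant[OF b_nonneg' b_summable] b_sum by simp

lemma secant_b_bounds:
  assumes "0 \<le> z" and "z < 1"
  shows "0 \<le> pgf_secant b z" and "pgf_secant b z \<le> EB"
  using assms pgf_secant_nonneg[OF b_nonneg' b_summable] pgf_secant_le_mom1[OF b_nonneg' summable_mom1_b]
  by auto

lemma pgf_qphase_eq:
  "i \<in> {1,2} \<Longrightarrow> 0 \<le> z \<Longrightarrow> z < 1
    \<Longrightarrow> pgf (qphase n i) z = phase_mass n i - (1 - z) * pgf_secant (qphase n i) z"
  unfolding phase_mass_def by (rule pgf_eq_secant) (auto intro: q_nonneg q_summable)

lemma pgf_qphase_bounds:
  assumes "i \<in> {1,2}" and "0 \<le> z" and "z < 1"
  shows "0 \<le> pgf (qphase n i) z" and "pgf (qphase n i) z \<le> phase_mass n i"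
proof -
  have "summable (\<lambda>x. q n (x, i) * z ^ x)"
    using assms q_nonneg q_summable by (intro summable_mult_power) auto
  then show "0 \<le> pgf (qphase n i) z" "pgf (qphase n i) z \<le> phase_mass n i"
    unfolding pgf_real phase_mass_def
    using assms q_summable[of i n] q_nonneg[of i n]
    by (auto intro!: suminf_nonneg suminf_le mult_left_le power_le_one)
qed

definition empty_prob :: "nat \<Rightarrow> real" where
  "empty_prob n = q n (0, 1) + q n (0, 2)"

definition mean_secant :: "nat \<Rightarrow> real \<Rightarrow> real" where
  "mean_secant n z = pgf_secant (qphase n 1) z + pgf_secant (qphase n 2) z"

definition drift :: "nat \<Rightarrow> real" where
  "drift n = rho a \<pi> - 1 + EB * empty_prob n + phase_weight * (phase_mass n 1 - phase_mass (Suc n) 1)"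

lemma mean_secant_nonneg: "0 \<le> z \<Longrightarrow> z < 1 \<Longrightarrow> 0 \<le> mean_secant n z"
  unfolding mean_secant_def
  by (intro add_nonneg_nonneg pgf_secant_nonneg q_nonneg q_summable) auto

lemma mean_secant_0: "mean_secant 0 z = geom_sum x0 z"
proof -
  have "pgf_secant (qphase 0 i) z = (if i = i0 then geom_sum x0 z else 0)" for i
  proof -
    have "(\<lambda>x. q 0 (x, i) * geom_sum x z) = (\<lambda>x. if x = x0 then (if i = i0 then geom_sum x z else 0) else 0)"
      by (auto simp: qdist_def)
    then show ?thesis
      unfolding pgf_secant_def
      using sums_single[of x0 "\<lambda>x. if i = i0 then geom_sum x z else 0"] by (simp add: sums_iff)
  qed
  then show ?thesis
    unfolding mean_secant_def using init by auto
qed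

lemma mean_secant_Suc_eq:
  assumes z: "0 < z" "z < 1"
  shows "z * mean_secant (Suc n) z
    = mean_secant n z - 1 + pgf_secant b z * empty_prob n
      + row_secant 1 z * pgf (qphase n 1) z + row_secant 2 z * pgf (qphase n 2) z
      - (1 - z) * pgf_secant b z * (row_secant 1 z * q n (0, 1) + row_secant 2 z * q n (0, 2))"
proof -
  define u where "u = 1 - z"
  define Q where "Q i = pgf (qphase n i) z" for i
  define \<beta> where "\<beta> i = row_secant i z" for i
  define g where "g = pgf_secant b z"
  have next_pgf: "z * (pgf (qphase (Suc n) 1) z + pgf (qphase (Suc n) 2) z)
      = (1 - u * \<beta> 1) * (Q 1 - u * g * q n (0, 1)) + (1 - u * \<beta> 2) * (Q 2 - u * g * q n (0, 2))"
  proof -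
    have "z * (pgf (qphase (Suc n) 1) z + pgf (qphase (Suc n) 2) z)
        = (pgf (a 1 1) z + pgf (a 1 2) z) * (Q 1 - q n (0, 1) * (1 - pgf b z))
          + (pgf (a 2 1) z + pgf (a 2 2) z) * (Q 2 - q n (0, 2) * (1 - pgf b z))"
      using pgf_qphase_Suc[of 1 z n] pgf_qphase_Suc[of 2 z n] z
      by (simp add: Q_def algebra_simps)
    then show ?thesis
      using pgf_row_eq[of 1 z] pgf_row_eq[of 2 z] pgf_b_eq[of z] z
      by (simp add: u_def \<beta>_def g_def mult_ac)
  qed
  have pgf_eq: "pgf (qphase m 1) z = phase_mass m 1 - u * pgf_secant (qphase m 1) z"
    "pgf (qphase m 2) z = phase_mass m 2 - u * pgf_secant (qphase m 2) z" for m
    using pgf_qphase_eq z by (simp_all add: u_def)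
  have "u * (z * mean_secant (Suc n) z)
      = u * (mean_secant n z - 1 + g * empty_prob n + \<beta> 1 * Q 1 + \<beta> 2 * Q 2
             - u * g * (\<beta> 1 * q n (0, 1) + \<beta> 2 * q n (0, 2)))"
    using next_pgf phase_mass_sum[of n] phase_mass_sum[of "Suc n"] u_def
      pgf_eq[of n] pgf_eq[of "Suc n"]
    unfolding mean_secant_def empty_prob_def Q_def by algebra
  moreover have "u \<noteq> 0"
    using z by (simp add: u_def)
  ultimately show ?thesis
    unfolding u_def Q_def \<beta>_def g_def by simp
qed

lemma mean_secant_Suc_le:
  assumes z: "0 < z" "z < 1"
  shows "z * mean_secant (Suc n) z \<le> mean_secant n z + drift n"
proof -
  have "0 \<le> (1 - z) * pgf_secant b z * (row_secant 1 z * q n (0, 1) + row_secant 2 z * q n (0, 2))"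
    using z secant_b_bounds row_secant_bounds q_nonneg by simp
  moreover have "pgf_secant b z * empty_prob n \<le> EB * empty_prob n"
    using z secant_b_bounds q_nonneg by (intro mult_right_mono) (auto simp: empty_prob_def)
  moreover have "row_secant 1 z * pgf (qphase n 1) z \<le> al 1 * phase_mass n 1"
    "row_secant 2 z * pgf (qphase n 2) z \<le> al 2 * phase_mass n 2"
    using z row_secant_bounds pgf_qphase_bounds by (auto intro!: mult_mono')
  ultimately have "z * mean_secant (Suc n) z
      \<le> mean_secant n z - 1 + EB * empty_prob n + (al 1 * phase_mass n 1 + al 2 * phase_mass n 2)"
    unfolding mean_secant_Suc_eq[OF z] by linarith
  also have "al 1 * phase_mass n 1 + al 2 * phase_mass n 2
      = rho a \<pi> + phase_weight * (phase_mass n 1 - phase_mass (Suc n) 1)"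
    using mean_arrivals_eq_rho_plus_phase_change[OF phase_mass_sum[of n]] phase_mass_Suc[of 1 n]
    by simp
  finally show ?thesis
    unfolding drift_def by simp
qed

lemma power_mean_secant_le:
  assumes "0 < z" and "z < 1"
  shows "z ^ N * mean_secant N z \<le> mean_secant 0 z + (\<Sum>n<N. z ^ n * drift n)"
proof (induction N)
  case (Suc N)
  have "z ^ Suc N * mean_secant (Suc N) z = z ^ N * (z * mean_secant (Suc N) z)"
    by (simp add: mult_ac)
  also have "\<dots> \<le> z ^ N * (mean_secant N z + drift N)"
    using mean_secant_Suc_le[OF assms, of N] assms by (intro mult_left_mono) auto
  also have "\<dots> \<le> mean_secant 0 z + (\<Sum>n<Suc N. z ^ n * drift n)"
    using Suc by (simp add: algebra_simps)
  finally show ?case .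
qed simp

lemma sum_drift_lower_bound: "0 \<le> real x0 + (\<Sum>n<N. drift n)"
proof (rule tendsto_lowerbound[OF _ _ trivial_limit_at_left_real])
  have "((\<lambda>z. real x0 + (\<Sum>n<N. z ^ n * drift n)) \<longlongrightarrow> real x0 + (\<Sum>n<N. 1 ^ n * drift n))
      (at_left (1::real))"
    by (intro tendsto_intros)
  then show "((\<lambda>z. real x0 + (\<Sum>n<N. z ^ n * drift n)) \<longlongrightarrow> real x0 + (\<Sum>n<N. drift n))
      (at_left (1::real))"
    by simp
  show "\<forall>\<^sub>F z in at_left 1. 0 \<le> real x0 + (\<Sum>n<N. z ^ n * drift n)"
    using eventually_at_left_1_unit
  proof eventually_elim
    case (elim z)
    have "0 \<le> z ^ N * mean_secant N z"
      using elim mean_secant_nonneg[of z N] by simp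
    also have "\<dots> \<le> geom_sum x0 z + (\<Sum>n<N. z ^ n * drift n)"
      using power_mean_secant_le[of z N] elim by (simp add: mean_secant_0)
    also have "geom_sum x0 z \<le> real x0"
      using elim by (intro geom_sum_le) auto
    finally show ?case by simp
  qed
qed

lemma sum_drift_eq:
  "(\<Sum>n<N. drift n) = real N * (rho a \<pi> - 1) + EB * (\<Sum>n<N. empty_prob n)
                      + phase_weight * (phase_mass 0 1 - phase_mass N 1)"
proof -
  have "(\<Sum>n<N. phase_mass n 1 - phase_mass (Suc n) 1) = phase_mass 0 1 - phase_mass N 1"
    by (rule sum_lessThan_telescope')
  then show ?thesis
    unfolding drift_def by (simp add: sum.distrib sum_distrib_left[symmetric])
qed

lemma sum_empty_prob_lower_bound:
  "real N * (1 - rho a \<pi>) - (real x0 + \<bar>phase_weight\<bar>) \<le> (\<Sum>n<N. EB * empty_prob n)"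
proof -
  have "0 \<le> phase_mass m 1" "phase_mass m 1 \<le> 1" for m
    using phase_mass_sum[of m] phase_mass_nonneg[of 1 m] phase_mass_nonneg[of 2 m] by auto
  then have "\<bar>phase_mass 0 1 - phase_mass N 1\<bar> \<le> 1"
    by (smt (verit))
  then have "\<bar>phase_weight * (phase_mass 0 1 - phase_mass N 1)\<bar> \<le> \<bar>phase_weight\<bar> * 1"
    unfolding abs_mult by (intro mult_left_mono) auto
  then have "phase_weight * (phase_mass 0 1 - phase_mass N 1) \<le> \<bar>phase_weight\<bar>"
    by simp
  then show ?thesis
    using sum_drift_lower_bound[of N] unfolding sum_drift_eq
    by (simp add: sum_distrib_left algebra_simps)
qed

lemma mom1_b_mult_f0_ge: "1 - rho a \<pi> \<le> EB * (f 0 1 + f 0 2)"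
proof (rule le_limit_if_partial_sums_ge)
  show "(\<lambda>n. EB * empty_prob n) \<longlonglongrightarrow> EB * (f 0 1 + f 0 2)"
    unfolding empty_prob_def using limit by (intro tendsto_intros) auto
qed (rule sum_empty_prob_lower_bound)

section \<open>The stationary distribution\<close>

abbreviation "fphase i \<equiv> \<lambda>x. f x i"

lemma q_tendsto_f: "i \<in> {1,2} \<Longrightarrow> (\<lambda>n. q n (x, i)) \<longlonglongrightarrow> f x i"
  by (rule limit[rule_format])

lemma f_nonneg: "i \<in> {1,2} \<Longrightarrow> 0 \<le> f x i"
  by (rule LIMSEQ_le_const[OF q_tendsto_f]) (use q_nonneg in auto)

lemma sum_f_le_1: "(\<Sum>x<N. f x 1 + f x 2) \<le> 1"
proof (rule LIMSEQ_le_const2)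
  show "(\<lambda>n. \<Sum>x<N. q n (x, 1) + q n (x, 2)) \<longlonglongrightarrow> (\<Sum>x<N. f x 1 + f x 2)"
    by (intro tendsto_intros q_tendsto_f) auto
  have le: "(\<Sum>x<N. q n (x, i)) \<le> phase_mass n i" if "i \<in> {1,2}" for n i
    unfolding phase_mass_def using that q_summable q_nonneg by (intro sum_le_suminf) auto
  have "(\<Sum>x<N. q n (x, 1) + q n (x, 2)) \<le> 1" for n
    using le[of 1 n] le[of 2 n] phase_mass_sum[of n] by (simp add: sum.distrib)
  then show "\<exists>N0. \<forall>n\<ge>N0. (\<Sum>x<N. q n (x, 1) + q n (x, 2)) \<le> 1"
    by blast
qed

lemma f_summable: "i \<in> {1,2} \<Longrightarrow> summable (fphase i)"
proof (rule summableI_nonneg_bounded[of _ 1])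
  assume i: "i \<in> {1,2}"
  show "0 \<le> f x i" for x
    using f_nonneg[OF i] .
  show "(\<Sum>x<N. f x i) \<le> 1" for N
    using i f_nonneg[of 1] f_nonneg[of 2] sum_f_le_1[of N]
      sum_mono[of "{..<N}" "fphase i" "\<lambda>x. f x 1 + f x 2"]
    by auto
qed

lemma qstep_f: "j \<in> {1,2} \<Longrightarrow> qstep a b (case_prod f) (y, j) = f y j"
proof -
  assume j: "j \<in> {1,2}"
  have "(\<lambda>n. qstep a b (q n) (y, j)) \<longlonglongrightarrow> qstep a b (case_prod f) (y, j)"
    unfolding qstep_def prod.case by (intro tendsto_intros q_tendsto_f) auto
  then have "(\<lambda>n. q (Suc n) (y, j)) \<longlonglongrightarrow> qstep a b (case_prod f) (y, j)"
    by (simp add: q_Suc)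
  moreover have "(\<lambda>n. q (Suc n) (y, j)) \<longlonglongrightarrow> f y j"
    using q_tendsto_f[OF j] by (rule LIMSEQ_Suc)
  ultimately show ?thesis
    by (rule LIMSEQ_unique)
qed

lemma f_pgf_sums:
  fixes z :: "'a::{real_normed_field,banach}"
  assumes "j \<in> {1,2}" and "norm z \<le> 1"
  shows "(\<lambda>y. of_real (f y j) * z ^ y)
           sums (\<Sum>i\<in>{1,2}. pgf (pre_arrival (case_prod f) b i) z * pgf (a i j) z)"
proof -
  have "(\<lambda>y. of_real (qstep a b (case_prod f) (y, j)) * z ^ y)
      sums (\<Sum>i\<in>{1,2}. pgf (pre_arrival (case_prod f) b i) z * pgf (a i j) z)"
    using assms by (intro pgf_qstep_sums a_nonneg' a_summable' b_nonneg' b_summable)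
      (auto intro: f_nonneg f_summable)
  then show ?thesis
    by (simp add: qstep_f[OF assms(1)])
qed

lemma pgf_fphase:
  fixes z :: "'a::{real_normed_field,banach}"
  assumes "j \<in> {1,2}" and "norm z \<le> 1"
  shows "z * pgf (fphase j) z
       = (\<Sum>i\<in>{1,2}. pgf (a i j) z * (pgf (fphase i) z - of_real (f 0 i) * (1 - pgf b z)))"
proof -
  have "z * pgf (\<lambda>y. qstep a b (case_prod f) (y, j)) z
      = (\<Sum>i\<in>{1,2}. pgf (a i j) z * (pgf (fphase i) z - of_real (f 0 i) * (1 - pgf b z)))"
    using assms by (subst pgf_qstep[where a=a and b=b])
      (auto intro: a_nonneg' a_summable' b_nonneg' b_summable b_pos f_nonneg f_summable)
  then show ?thesis
    by (simp add: qstep_f[OF assms(1)])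
qed

definition f_mass :: "nat \<Rightarrow> real" where
  "f_mass i = suminf (fphase i)"

definition f_total :: real where
  "f_total = f_mass 1 + f_mass 2"

definition f_empty :: real where
  "f_empty = f 0 1 + f 0 2"

lemma f_mass_stationary: "j \<in> {1,2} \<Longrightarrow> f_mass j = f_mass 1 * P 1 j + f_mass 2 * P 2 j"
  using pgf_fphase[of j "1::real"] by (simp add: f_mass_def pgf_at_1 b_sum Pm_def mult.commute)

lemma f_total_le_1: "f_total \<le> 1"
proof -
  have "(\<lambda>x. f x 1 + f x 2) sums f_total"
    unfolding f_total_def f_mass_def using f_summable by (intro sums_add summable_sums) auto
  then have "f_total = (\<Sum>x. f x 1 + f x 2)"
    by (simp add: sums_iff)
  also have "\<dots> \<le> 1"
    using f_summable sum_f_le_1 by (intro suminf_le_const summable_add) auto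
  finally show ?thesis .
qed

lemma f_mass_eq: "f_mass 1 = f_total * \<pi> 1" "f_mass 2 = f_total * \<pi> 2"
proof -
  have "f_mass 1 = f_mass 1 * (1 - P 1 2) + f_mass 2 * P 2 1"
    using f_mass_stationary[of 1] P11_eq by simp
  then have "f_mass 1 * S = f_total * P 2 1"
    unfolding f_total_def by (simp add: algebra_simps)
  then show m1: "f_mass 1 = f_total * \<pi> 1"
    unfolding pi1_eq using S_pos by (simp add: field_simps)
  have "f_mass 2 = f_total - f_mass 1"
    unfolding f_total_def by simp
  also have "\<dots> = f_total * (1 - \<pi> 1)"
    unfolding m1 by (simp add: algebra_simps)
  finally show "f_mass 2 = f_total * \<pi> 2"
    using stationary(3) by simp
qed

definition row_secant2 :: "nat \<Rightarrow> real \<Rightarrow> real" where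
  "row_secant2 i z = pgf_secant2 (a i 1) z + pgf_secant2 (a i 2) z"

lemma pgf_a_eq:
  "i \<in> {1,2} \<Longrightarrow> j \<in> {1,2} \<Longrightarrow> 0 \<le> z \<Longrightarrow> z < 1
    \<Longrightarrow> pgf (a i j) z = P i j - (1 - z) * pgf_secant (a i j) z"
  unfolding Pm_def by (intro pgf_eq_secant a_nonneg' a_summable')

lemma pgf_fphase_eq:
  "i \<in> {1,2} \<Longrightarrow> 0 \<le> z \<Longrightarrow> z < 1
    \<Longrightarrow> pgf (fphase i) z = f_mass i - (1 - z) * pgf_secant (fphase i) z"
  unfolding f_mass_def by (intro pgf_eq_secant f_nonneg f_summable)

lemma row_secant_eq:
  "i \<in> {1,2} \<Longrightarrow> 0 \<le> z \<Longrightarrow> z \<le> 1 \<Longrightarrow> row_secant i z = al i - (1 - z) * row_secant2 i z"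
proof -
  assume "i \<in> {1,2}" "0 \<le> z" "z \<le> 1"
  then have "pgf_secant (a i j) z = alpha a i j - (1 - z) * pgf_secant2 (a i j) z" if "j \<in> {1,2}" for j
    unfolding alpha_def using that by (intro pgf_secant_eq_mom1_minus a_nonneg' a_summable' a_second')
  from this[of 1] this[of 2] show ?thesis
    unfolding row_secant_def row_secant2_def alpha_row_def by (simp add: algebra_simps)
qed

lemma secant_b_eq: "0 \<le> z \<Longrightarrow> z \<le> 1 \<Longrightarrow> pgf_secant b z = EB - (1 - z) * pgf_secant2 b z"
  by (intro pgf_secant_eq_mom1_minus b_nonneg' b_summable b_second')

lemma tendsto_secant_a:
  "i \<in> {1,2} \<Longrightarrow> j \<in> {1,2} \<Longrightarrow> (pgf_secant (a i j) \<longlongrightarrow> alpha a i j) (at_left 1)"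
  unfolding alpha_def by (intro tendsto_pgf_secant a_nonneg' a_summable' a_second')

lemma tendsto_row_secant: "i \<in> {1,2} \<Longrightarrow> (row_secant i \<longlongrightarrow> al i) (at_left 1)"
  unfolding row_secant_def[abs_def] alpha_row_def by (intro tendsto_add tendsto_secant_a) auto

lemma tendsto_row_secant2:
  "i \<in> {1,2} \<Longrightarrow> (row_secant2 i \<longlongrightarrow> fmom2 (a i 1) / 2 + fmom2 (a i 2) / 2) (at_left 1)"
  unfolding row_secant2_def[abs_def]
  by (intro tendsto_add tendsto_pgf_secant2 a_nonneg' a_second') auto

lemma tendsto_secant_b: "(pgf_secant b \<longlongrightarrow> EB) (at_left 1)"
  by (intro tendsto_pgf_secant b_nonneg' b_summable b_second')

lemma tendsto_secant2_b: "(pgf_secant2 b \<longlongrightarrow> fmom2 b / 2) (at_left 1)"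
  by (intro tendsto_pgf_secant2 b_nonneg' b_second')

lemma tendsto_pgf_fphase: "i \<in> {1,2} \<Longrightarrow> (pgf (fphase i) \<longlongrightarrow> f_mass i) (at_left 1)"
  using continuous_on_Icc_tendsto_at_left[OF continuous_on_pgf zero_less_one, of "fphase i"]
  by (simp add: f_nonneg f_summable pgf_at_1 f_mass_def)

lemma pgf_fphase_secant_form:
  assumes "j \<in> {1,2}" and "0 < z" and "z < 1"
  shows "z * pgf (fphase j) z
    = (P 1 j - (1 - z) * pgf_secant (a 1 j) z) * (pgf (fphase 1) z - f 0 1 * ((1 - z) * pgf_secant b z))
      + (P 2 j - (1 - z) * pgf_secant (a 2 j) z) * (pgf (fphase 2) z - f 0 2 * ((1 - z) * pgf_secant b z))"
  using pgf_fphase[of j z] assms pgf_a_eq[of 1 j z] pgf_a_eq[of 2 j z] pgf_b_eq[of z]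
  by simp

lemma total_secant_equation:
  assumes "0 < z" and "z < 1"
  shows "f_total - pgf_secant b z * f_empty - row_secant 1 z * pgf (fphase 1) z - row_secant 2 z * pgf (fphase 2) z
    = (f_total - pgf (fphase 1) z - pgf (fphase 2) z)
      - (1 - z) * pgf_secant b z * (row_secant 1 z * f 0 1 + row_secant 2 z * f 0 2)"
proof -
  define u where "u = 1 - z"
  have sum: "(1 - u) * (pgf (fphase 1) z + pgf (fphase 2) z)
      = (1 - u * row_secant 1 z) * (pgf (fphase 1) z - f 0 1 * (u * pgf_secant b z))
        + (1 - u * row_secant 2 z) * (pgf (fphase 2) z - f 0 2 * (u * pgf_secant b z))"
  proof -
    have "P 1 1 + P 1 2 = 1" "P 2 1 + P 2 2 = 1"
      using stochastic by auto
    then show ?thesis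
      using pgf_fphase_secant_form[OF insertI1 assms] pgf_fphase_secant_form[OF insertI2[OF singletonI] assms]
      unfolding row_secant_def u_def by algebra
  qed
  have "(1 - z) * (f_total - pgf_secant b z * f_empty - row_secant 1 z * pgf (fphase 1) z
          - row_secant 2 z * pgf (fphase 2) z)
      = (1 - z) * ((f_total - pgf (fphase 1) z - pgf (fphase 2) z)
          - (1 - z) * pgf_secant b z * (row_secant 1 z * f 0 1 + row_secant 2 z * f 0 2))"
    using sum unfolding f_empty_def u_def by algebra
  then show ?thesis
    using assms by simp
qed

lemma balance: "f_total - EB * f_empty - f_total * rho a \<pi> = 0"
proof -
  let ?lhs = "\<lambda>z. f_total - pgf_secant b z * f_empty - row_secant 1 z * pgf (fphase 1) z
                  - row_secant 2 z * pgf (fphase 2) z"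
  have "(?lhs \<longlongrightarrow> f_total - EB * f_empty - al 1 * f_mass 1 - al 2 * f_mass 2) (at_left 1)"
    by (intro tendsto_intros tendsto_secant_b tendsto_row_secant tendsto_pgf_fphase) auto
  moreover have "(?lhs \<longlongrightarrow> (f_total - f_mass 1 - f_mass 2) - (1 - 1) * EB * (al 1 * f 0 1 + al 2 * f 0 2))
      (at_left 1)"
  proof (rule Lim_transform_eventually)
    show "((\<lambda>z. (f_total - pgf (fphase 1) z - pgf (fphase 2) z)
            - (1 - z) * pgf_secant b z * (row_secant 1 z * f 0 1 + row_secant 2 z * f 0 2))
          \<longlongrightarrow> (f_total - f_mass 1 - f_mass 2) - (1 - 1) * EB * (al 1 * f 0 1 + al 2 * f 0 2))
          (at_left 1)"
      by (intro tendsto_intros tendsto_secant_b tendsto_row_secant tendsto_pgf_fphase) auto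
    show "\<forall>\<^sub>F z in at_left 1. (f_total - pgf (fphase 1) z - pgf (fphase 2) z)
            - (1 - z) * pgf_secant b z * (row_secant 1 z * f 0 1 + row_secant 2 z * f 0 2) = ?lhs z"
      using eventually_at_left_1_unit by eventually_elim (metis total_secant_equation)
  qed
  ultimately have "f_total - EB * f_empty - al 1 * f_mass 1 - al 2 * f_mass 2 = 0"
    using tendsto_unique[OF trivial_limit_at_left_real] unfolding f_total_def by fastforce
  then show ?thesis
    unfolding f_mass_eq rho_def by (simp add: algebra_simps)
qed

lemma f_total_eq_1: "f_total = 1"
proof -
  have "1 * (1 - rho a \<pi>) \<le> f_total * (1 - rho a \<pi>)"
    using mom1_b_mult_f0_ge balance unfolding f_empty_def by (simp add: algebra_simps)
  then show ?thesis
    using f_total_le_1 rho_lt1 by (simp add: mult_le_cancel_right)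
qed

lemma mom1_b_mult_f_empty: "EB * f_empty = 1 - rho a \<pi>"
  using balance f_total_eq_1 by simp

lemma f_mass_eq_pi: "f_mass 1 = \<pi> 1" "f_mass 2 = \<pi> 2"
  using f_mass_eq f_total_eq_1 by simp_all

section \<open>The mean number of customers\<close>

text \<open>Dividing the phase-1 equation and the sum of both phase equations by 1 - z yields a linear
  system in the secant slopes of the two phase generating functions.\<close>

definition sys11 :: "real \<Rightarrow> real" where
  "sys11 z = (1 - P 1 1) - (1 - z) + (1 - z) * pgf_secant (a 1 1) z"

definition sys12 :: "real \<Rightarrow> real" where
  "sys12 z = - P 2 1 + (1 - z) * pgf_secant (a 2 1) z"

definition sys21 :: "real \<Rightarrow> real" where
  "sys21 z = 1 - row_secant 1 z"

definition sys22 :: "real \<Rightarrow> real" where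
  "sys22 z = 1 - row_secant 2 z"

definition sys_rhs1 :: "real \<Rightarrow> real" where
  "sys_rhs1 z = - \<pi> 1 + pgf_secant (a 1 1) z * \<pi> 1 + pgf_secant (a 2 1) z * \<pi> 2
    + pgf_secant b z * (P 1 1 * f 0 1 + P 2 1 * f 0 2)
    - (1 - z) * pgf_secant b z * (pgf_secant (a 1 1) z * f 0 1 + pgf_secant (a 2 1) z * f 0 2)"

definition sys_rhs2 :: "real \<Rightarrow> real" where
  "sys_rhs2 z = pgf_secant2 b z * f_empty + row_secant2 1 z * \<pi> 1 + row_secant2 2 z * \<pi> 2
    + pgf_secant b z * (row_secant 1 z * f 0 1 + row_secant 2 z * f 0 2)"

lemma pgf_fphase_eq_pi:
  assumes "0 \<le> z" and "z < 1"
  shows "pgf (fphase 1) z = \<pi> 1 - (1 - z) * pgf_secant (fphase 1) z"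
    and "pgf (fphase 2) z = \<pi> 2 - (1 - z) * pgf_secant (fphase 2) z"
  using assms pgf_fphase_eq f_mass_eq_pi by auto

lemma secant_equation_phase1:
  assumes z: "0 < z" "z < 1"
  shows "sys11 z * pgf_secant (fphase 1) z + sys12 z * pgf_secant (fphase 2) z = sys_rhs1 z"
proof -
  have "\<pi> 1 = \<pi> 1 * P 1 1 + \<pi> 2 * P 2 1"
    using f_mass_stationary[of 1] f_mass_eq_pi by simp
  then have "(1 - z) * (sys11 z * pgf_secant (fphase 1) z + sys12 z * pgf_secant (fphase 2) z)
      = (1 - z) * sys_rhs1 z"
    using pgf_fphase_secant_form[OF insertI1 z] z pgf_fphase_eq_pi[OF less_imp_le[OF z(1)] z(2)]
    unfolding sys11_def sys12_def sys_rhs1_def by algebra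
  then show ?thesis
    using z by simp
qed

lemma secant_equation_total:
  assumes z: "0 < z" "z < 1"
  shows "sys21 z * pgf_secant (fphase 1) z + sys22 z * pgf_secant (fphase 2) z = sys_rhs2 z"
proof -
  have R: "row_secant 1 z = al 1 - (1 - z) * row_secant2 1 z"
    "row_secant 2 z = al 2 - (1 - z) * row_secant2 2 z"
    using z row_secant_eq by auto
  have g: "pgf_secant b z = EB - (1 - z) * pgf_secant2 b z"
    using z secant_b_eq by auto
  have "1 - EB * f_empty - (al 1 * \<pi> 1 + al 2 * \<pi> 2) = 0" "\<pi> 1 + \<pi> 2 = 1"
    using mom1_b_mult_f_empty stationary(3) unfolding rho_def by (simp_all add: algebra_simps)
  then have "(1 - z) * (sys21 z * pgf_secant (fphase 1) z + sys22 z * pgf_secant (fphase 2) z)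
      = (1 - z) * sys_rhs2 z"
    using total_secant_equation[OF z] g R pgf_fphase_eq_pi[OF less_imp_le[OF z(1)] z(2)] z
    unfolding sys21_def sys22_def sys_rhs2_def f_total_eq_1 f_empty_def by algebra
  then show ?thesis
    using z by simp
qed

definition lim_rhs1 :: real where
  "lim_rhs1 = - \<pi> 1 + alpha a 1 1 * \<pi> 1 + alpha a 2 1 * \<pi> 2 + EB * (P 1 1 * f 0 1 + P 2 1 * f 0 2)"

definition lim_rhs2 :: real where
  "lim_rhs2 = fmom2 b / 2 * f_empty + (fmom2 (a 1 1) / 2 + fmom2 (a 1 2) / 2) * \<pi> 1
    + (fmom2 (a 2 1) / 2 + fmom2 (a 2 2) / 2) * \<pi> 2 + EB * (al 1 * f 0 1 + al 2 * f 0 2)"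

lemma tendsto_sys:
  shows "(sys11 \<longlongrightarrow> P 1 2) (at_left 1)" and "(sys12 \<longlongrightarrow> - P 2 1) (at_left 1)"
    and "(sys21 \<longlongrightarrow> 1 - al 1) (at_left 1)" and "(sys22 \<longlongrightarrow> 1 - al 2) (at_left 1)"
    and "(sys_rhs1 \<longlongrightarrow> lim_rhs1) (at_left 1)" and "(sys_rhs2 \<longlongrightarrow> lim_rhs2) (at_left 1)"
proof -
  have "(sys11 \<longlongrightarrow> (1 - (1 - P 1 2)) - (1 - 1) + (1 - 1) * alpha a 1 1) (at_left 1)"
    unfolding sys11_def[abs_def] P11_eq by (intro tendsto_intros tendsto_secant_a) auto
  then show "(sys11 \<longlongrightarrow> P 1 2) (at_left 1)"
    by simp
  have "(sys12 \<longlongrightarrow> - P 2 1 + (1 - 1) * alpha a 2 1) (at_left 1)"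
    unfolding sys12_def[abs_def] by (intro tendsto_intros tendsto_secant_a) auto
  then show "(sys12 \<longlongrightarrow> - P 2 1) (at_left 1)"
    by simp
  show "(sys21 \<longlongrightarrow> 1 - al 1) (at_left 1)" "(sys22 \<longlongrightarrow> 1 - al 2) (at_left 1)"
    unfolding sys21_def[abs_def] sys22_def[abs_def] by (intro tendsto_intros tendsto_row_secant; simp)+
  have "(sys_rhs1 \<longlongrightarrow> - \<pi> 1 + alpha a 1 1 * \<pi> 1 + alpha a 2 1 * \<pi> 2 + EB * (P 1 1 * f 0 1 + P 2 1 * f 0 2)
      - (1 - 1) * EB * (alpha a 1 1 * f 0 1 + alpha a 2 1 * f 0 2)) (at_left 1)"
    unfolding sys_rhs1_def[abs_def] by (intro tendsto_intros tendsto_secant_a tendsto_secant_b) auto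
  then show "(sys_rhs1 \<longlongrightarrow> lim_rhs1) (at_left 1)"
    by (simp add: lim_rhs1_def)
  show "(sys_rhs2 \<longlongrightarrow> lim_rhs2) (at_left 1)"
    unfolding sys_rhs2_def[abs_def] lim_rhs2_def
    by (intro tendsto_intros tendsto_secant_b tendsto_secant2_b tendsto_row_secant tendsto_row_secant2) auto
qed

lemma limit_determinant: "P 1 2 * (1 - al 2) - (- P 2 1) * (1 - al 1) = S * (1 - rho a \<pi>)"
proof -
  have "S * ((P 2 1 * al 1 + P 1 2 * al 2) / S) = P 2 1 * al 1 + P 1 2 * al 2"
    using S_pos by simp
  then show ?thesis
    unfolding rho_eq by (simp add: algebra_simps)
qed

definition mean_limit :: real where
  "mean_limit = (lim_rhs1 * (al 1 - al 2) + lim_rhs2 * S) / (S * (1 - rho a \<pi>))"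

lemma tendsto_f_secant_sum:
  "((\<lambda>z. pgf_secant (fphase 1) z + pgf_secant (fphase 2) z) \<longlongrightarrow> mean_limit) (at_left 1)"
proof (rule Lim_transform_eventually)
  have det: "((\<lambda>z. sys11 z * sys22 z - sys12 z * sys21 z) \<longlongrightarrow> S * (1 - rho a \<pi>)) (at_left 1)"
    unfolding limit_determinant[symmetric] by (intro tendsto_intros tendsto_sys)
  have det_nz: "S * (1 - rho a \<pi>) \<noteq> 0"
    using S_pos rho_lt1 by simp
  have "((\<lambda>z. (sys_rhs1 z * (sys22 z - sys21 z) + sys_rhs2 z * (sys11 z - sys12 z))
      / (sys11 z * sys22 z - sys12 z * sys21 z))
      \<longlongrightarrow> (lim_rhs1 * ((1 - al 2) - (1 - al 1)) + lim_rhs2 * (P 1 2 - - P 2 1)) / (S * (1 - rho a \<pi>)))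
      (at_left 1)"
    by (intro tendsto_intros tendsto_sys det det_nz)
  then show "((\<lambda>z. (sys_rhs1 z * (sys22 z - sys21 z) + sys_rhs2 z * (sys11 z - sys12 z))
      / (sys11 z * sys22 z - sys12 z * sys21 z)) \<longlongrightarrow> mean_limit) (at_left 1)"
    by (simp add: mean_limit_def)
  show "\<forall>\<^sub>F z in at_left 1.
      (sys_rhs1 z * (sys22 z - sys21 z) + sys_rhs2 z * (sys11 z - sys12 z))
      / (sys11 z * sys22 z - sys12 z * sys21 z) = pgf_secant (fphase 1) z + pgf_secant (fphase 2) z"
    using eventually_at_left_1_unit tendsto_imp_eventually_ne[OF det det_nz]
  proof eventually_elim
    case (elim z)
    then show ?case
      using sum_of_solution_2x2[OF secant_equation_phase1 secant_equation_total] by simp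
  qed
qed

lemma has_sum_mean_limit: "((\<lambda>x. real x * (f x 1 + f x 2)) has_sum mean_limit) UNIV"
proof (rule has_sum_mom1_if_tendsto_secant)
  show "0 \<le> f k 1 + f k 2" for k
    using f_nonneg[of 1 k] f_nonneg[of 2 k] by simp
  show "summable (\<lambda>k. f k 1 + f k 2)"
    using f_summable by (intro summable_add) auto
  show "(pgf_secant (\<lambda>k. f k 1 + f k 2) \<longlongrightarrow> mean_limit) (at_left 1)"
  proof (rule Lim_transform_eventually[OF tendsto_f_secant_sum])
    show "\<forall>\<^sub>F z in at_left 1. pgf_secant (fphase 1) z + pgf_secant (fphase 2) z
        = pgf_secant (\<lambda>k. f k 1 + f k 2) z"
      using eventually_at_left_1_unit
    proof eventually_elim
      case (elim z)
      then have "summable (\<lambda>k. f k i * geom_sum k z)" if "i \<in> {1,2}" for i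
        using that sums_pgf_secant[OF f_nonneg f_summable, of i z] by (auto simp: sums_iff)
      then show ?case
        unfolding pgf_secant_def by (simp add: distrib_right suminf_add)
    qed
  qed
qed

lemma mean_limit_eq:
  "mean_limit = rho a \<pi> / 2 + VarA a \<pi> / (2 * (1 - rho a \<pi>)) + fmom2 b / (2 * EB)
     + (- rho a \<pi> + EB * (f 0 1 * al 1 + f 0 2 * al 2) + rho a \<pi> * (alpha a 1 1 + alpha a 2 2)
        + alpha a 1 2 * alpha a 2 1 - alpha a 1 1 * alpha a 2 2) / (S * (1 - rho a \<pi>))"
  (is "_ = rho a \<pi> / 2 + VarA a \<pi> / (2 * ?K) + fmom2 b / (2 * EB) + ?N / (S * ?K)")
proof -
  have K: "?K \<noteq> 0" and EB: "EB \<noteq> 0" and S: "S \<noteq> 0"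
    using rho_lt1 EB_ge_1 S_pos by auto
  have "EB * f 0 1 + EB * f 0 2 = ?K"
    using mom1_b_mult_f_empty unfolding f_empty_def by (simp add: distrib_left)
  moreover have "P 1 2 = \<pi> 2 * S" "P 2 1 = \<pi> 1 * S"
    using pi1_eq pi2_eq S by simp_all
  ultimately have rhs1: "lim_rhs1 * (al 1 - al 2) = rho a \<pi> * S * ?K + ?N - S * (EB * (f 0 1 * al 1 + f 0 2 * al 2))"
    using stationary(3) P11_eq
    unfolding lim_rhs1_def rho_def alpha_row_def by algebra
  have rhs2: "lim_rhs2 * S = S * (fmom2 b * ?K / (2 * EB) + (VarA a \<pi> - rho a \<pi> * ?K) / 2
      + EB * (f 0 1 * al 1 + f 0 2 * al 2))"
  proof -
    have fe: "f_empty = ?K / EB"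
      using mom1_b_mult_f_empty EB by (simp add: field_simps)
    show ?thesis
      unfolding lim_rhs2_def VarA_def fe using EB by (simp add: field_simps power2_eq_square)
  qed
  have "mean_limit = (rho a \<pi> * S * ?K + ?N + S * (fmom2 b * ?K / (2 * EB)
      + (VarA a \<pi> - rho a \<pi> * ?K) / 2)) / (S * ?K)"
    unfolding mean_limit_def rhs1 rhs2 by (simp add: algebra_simps)
  also have "\<dots> = rho a \<pi> / 2 + VarA a \<pi> / (2 * ?K) + fmom2 b / (2 * EB) + ?N / (S * ?K)"
  proof -
    have "(r * s * k + n + s * (c * k / (2 * e) + (v - r * k) / 2)) / (s * k)
        = r / 2 + v / (2 * k) + c / (2 * e) + n / (s * k)"
      if "k \<noteq> 0" "e \<noteq> 0" "s \<noteq> 0" for r s k n c v e :: real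
      using that by (simp add: field_simps)
    then show ?thesis
      using K EB S by blast
  qed
  finally show ?thesis .
qed

section \<open>The empty probabilities\<close>

text \<open>At a root of the kernel determinant inside the unit disc the two stationary equations for
  the phase generating functions, evaluated there, become linearly dependent; since 1 - B(zh) \<noteq> 0,
  this leaves a linear relation between f 0 1 and f 0 2.\<close>

lemma f0_kernel_relations:
  fixes zh :: complex
  assumes z: "norm zh < 1"
    and root: "(zh - pgf (a 1 1) zh) * (zh - pgf (a 2 2) zh) - pgf (a 1 2) zh * pgf (a 2 1) zh = 0"
  shows "pgf (a 1 2) zh * of_real (f 0 1) + (zh - pgf (a 1 1) zh) * of_real (f 0 2) = 0"
    and "(zh - pgf (a 2 2) zh) * of_real (f 0 1) + pgf (a 2 1) zh * of_real (f 0 2) = 0"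
proof -
  define H where "H i = pgf (pre_arrival (case_prod f) b i) zh" for i
  have F: "pgf (fphase j) zh = H 1 * pgf (a 1 j) zh + H 2 * pgf (a 2 j) zh" if "j \<in> {1,2}" for j
    using sums_unique[OF f_pgf_sums[OF that, of zh]] z unfolding H_def pgf_def by simp
  have H: "zh * H i = pgf (fphase i) zh - of_real (f 0 i) * (1 - pgf b zh)" if "i \<in> {1,2}" for i
  proof -
    have "zh * H i = pgf (\<lambda>x. case_prod f (x, i)) zh - of_real (case_prod f (0, i)) * (1 - pgf b zh)"
      unfolding H_def using that z
      by (intro pgf_pre_arrival b_nonneg' b_summable b_pos) (auto intro: f_nonneg f_summable)
    then show ?thesis
      by simp
  qed
  have "norm (pgf b zh) < 1"
    using norm_pgf_le[OF b_nonneg' b_pos b_summable b_sum, of zh] z by simp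
  then have "1 - pgf b zh \<noteq> 0"
    by auto
  moreover have "(1 - pgf b zh) * (pgf (a 1 2) zh * of_real (f 0 1) + (zh - pgf (a 1 1) zh) * of_real (f 0 2)) = 0"
    "(1 - pgf b zh) * ((zh - pgf (a 2 2) zh) * of_real (f 0 1) + pgf (a 2 1) zh * of_real (f 0 2)) = 0"
    using F[OF insertI1] F[OF insertI2[OF singletonI]] H[OF insertI1] H[OF insertI2[OF singletonI]] root
    by algebra+
  ultimately show "pgf (a 1 2) zh * of_real (f 0 1) + (zh - pgf (a 1 1) zh) * of_real (f 0 2) = 0"
    and "(zh - pgf (a 2 2) zh) * of_real (f 0 1) + pgf (a 2 1) zh * of_real (f 0 2) = 0"
    by simp_all
qed

lemma f0_at_kernel_root:
  fixes zh :: complex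
  assumes z: "norm zh < 1"
    and root: "(zh - gf (a 1 1) zh) * (zh - gf (a 2 2) zh) - gf (a 1 2) zh * gf (a 2 1) zh = 0"
    and nz1: "gf (a 1 1) zh + gf (a 1 2) zh - zh \<noteq> 0"
    and nz2: "gf (a 2 1) zh + gf (a 2 2) zh - zh \<noteq> 0"
  shows "complex_of_real (f 0 1) = complex_of_real ((1 - rho a \<pi>) / mom1 b)
                 * (gf (a 1 1) zh - zh) / (gf (a 1 1) zh + gf (a 1 2) zh - zh)"
    and "complex_of_real (f 0 2) = complex_of_real ((1 - rho a \<pi>) / mom1 b)
                 * (gf (a 2 2) zh - zh) / (gf (a 2 1) zh + gf (a 2 2) zh - zh)"
proof -
  define c0 where "c0 = (1 - rho a \<pi>) / EB"
  note K = f0_kernel_relations[OF z root[unfolded gf_eq_pgf]]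
  have "f 0 1 + f 0 2 = c0"
    using mom1_b_mult_f_empty EB_ge_1 unfolding c0_def f_empty_def by (simp add: field_simps)
  then have sum: "of_real (f 0 1) + of_real (f 0 2) = (of_real c0 :: complex)"
    by (metis of_real_add)
  have "of_real (f 0 1) * (pgf (a 1 1) zh + pgf (a 1 2) zh - zh) = of_real c0 * (pgf (a 1 1) zh - zh)"
    using K(1) sum by algebra
  moreover have "of_real (f 0 2) * (pgf (a 2 1) zh + pgf (a 2 2) zh - zh) = of_real c0 * (pgf (a 2 2) zh - zh)"
    using K(2) sum by algebra
  ultimately show "complex_of_real (f 0 1) = complex_of_real ((1 - rho a \<pi>) / mom1 b)
                 * (gf (a 1 1) zh - zh) / (gf (a 1 1) zh + gf (a 1 2) zh - zh)"
    and "complex_of_real (f 0 2) = complex_of_real ((1 - rho a \<pi>) / mom1 b)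
                 * (gf (a 2 2) zh - zh) / (gf (a 2 1) zh + gf (a 2 2) zh - zh)"
    using nz1 nz2 unfolding c0_def[symmetric] gf_eq_pgf by (simp_all add: field_simps)
qed
end

theorem mainTheorem12:
  fixes a :: "nat \<Rightarrow> nat \<Rightarrow> nat \<Rightarrow> real" and b :: "nat \<Rightarrow> real"
    and \<pi> :: "nat \<Rightarrow> real" and f :: "nat \<Rightarrow> nat \<Rightarrow> real" and x0 i0 :: nat
  assumes a_nonneg: "\<forall>i\<in>{1,2}. \<forall>j\<in>{1,2}. \<forall>k. a i j k \<ge> 0"
    and a_summable: "\<forall>i\<in>{1,2}. \<forall>j\<in>{1,2}. summable (a i j)"
    and stochastic: "\<forall>i\<in>{1,2}. Pm a i 1 + Pm a i 2 = 1"
    and irreducible: "Pm a 1 2 > 0" "Pm a 2 1 > 0"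
    and stationary: "\<pi> 1 \<ge> 0" "\<pi> 2 \<ge> 0" "\<pi> 1 + \<pi> 2 = 1"
      "\<forall>j\<in>{1,2}. \<pi> j = \<pi> 1 * Pm a 1 j + \<pi> 2 * Pm a 2 j"
    and a_second: "\<forall>i\<in>{1,2}. \<forall>j\<in>{1,2}. summable (\<lambda>k. real k * (real k - 1) * a i j k)"
    and rho_lt1: "rho a \<pi> < 1"
    and b_nonneg: "\<forall>m. b m \<ge> 0" and b_pos: "b 0 = 0"
    and b_summable: "summable b" and b_sum: "suminf b = 1"
    and b_second: "summable (\<lambda>m. (real m)^2 * b m)"
    and init: "i0 \<in> {1,2}"
    and limit: "\<forall>x. \<forall>j\<in>{1,2}. (\<lambda>n. qdist a b x0 i0 n (x, j)) \<longlonglongrightarrow> f x j"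
  shows "((\<lambda>x. real x * (f x 1 + f x 2)) has_sum
           (rho a \<pi> / 2 + VarA a \<pi> / (2 * (1 - rho a \<pi>))
            + fmom2 b / (2 * mom1 b)
            + (- rho a \<pi> + mom1 b * (f 0 1 * alpha_row a 1 + f 0 2 * alpha_row a 2)
               + rho a \<pi> * (alpha a 1 1 + alpha a 2 2)
               + alpha a 1 2 * alpha a 2 1 - alpha a 1 1 * alpha a 2 2)
              / ((Pm a 1 2 + Pm a 2 1) * (1 - rho a \<pi>)))) UNIV
       \<and> (\<forall>zh. norm zh < 1
              \<and> (zh - gf (a 1 1) zh) * (zh - gf (a 2 2) zh) - gf (a 1 2) zh * gf (a 2 1) zh = 0
              \<and> gf (a 1 1) zh + gf (a 1 2) zh - zh \<noteq> 0
              \<and> gf (a 2 1) zh + gf (a 2 2) zh - zh \<noteq> 0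
          \<longrightarrow> complex_of_real (f 0 1) = complex_of_real ((1 - rho a \<pi>) / mom1 b)
                 * (gf (a 1 1) zh - zh) / (gf (a 1 1) zh + gf (a 1 2) zh - zh)
            \<and> complex_of_real (f 0 2) = complex_of_real ((1 - rho a \<pi>) / mom1 b)
                 * (gf (a 2 2) zh - zh) / (gf (a 2 1) zh + gf (a 2 2) zh - zh))"
proof -
  interpret modulated_queue a b \<pi> f x0 i0
    by unfold_locales (fact assms)+
  show ?thesis
    using has_sum_mean_limit mean_limit_eq f0_at_kernel_root by auto
qed
end
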